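(* Let $T>0$ and let $(c,\rho,\theta,u)$ be a smooth solution of (NS) on $[0,T]\times\mathbb T$ with $c\in[0,1]$ and assume there are positive constants with $\underline\rho\le\rho\le\overline\rho$ and $\underline\theta\le\theta\le\overline\theta$ on $[0,T]\times\mathbb T$. Then there exist constants $C_8,C_9>0$, depending only on $T$, these bounds, $\mu_\pm,\gamma_\pm,c_{v,\pm}$, $\int_0^1\sigma_0^2$ and $\int_0^1\rho_0E_0$, such that $\int_0^1(\partial_xu)^2(t)\le C_8$ for all $t\in[0,T]$ and $\int_0^T\|\partial_xu\|_{L^\infty(\mathbb T)}^2\le C_9$; i.e. $\partial_xu\in L^\infty(0,T;L^2(\mathbb T))\cap L^2(0,T;L^\infty(\mathbb T))$ using only $\sigma_0\in L^2(\mathbb T)$.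
   Context: $\mathbb T=\mathbb R/\mathbb Z$ is identified with $[0,1)$. Fix constants $\mu_\pm>0$, $\gamma_\pm>1$, $c_{v,\pm}>0$, and for $c\in[0,1]$ set $\mu(c)=c\mu_++(1-c)\mu_-$, $\gamma(c)=c\gamma_++(1-c)\gamma_-$, $c_v(c)=c\,c_{v,+}+(1-c)c_{v,-}$. For unknowns $c,\rho,\theta,u$ on $[0,T]\times\mathbb T$, write $p=(\gamma(c)-1)\rho\theta$, $\sigma=\mu(c)\partial_xu-p$, $E=u^2/2+c_v(c)\theta$. The mesoscopic system (NS) is $\partial_t\rho+\partial_x(\rho u)=0$, $\partial_t(\rho c)+\partial_x(\rho c u)=0$, $\partial_t(\rho u)+\partial_x(\rho u^2)=\partial_x\sigma$, $\partial_t(\rho E)+\partial_x(\rho E u)=\partial_x(\sigma u)$, with initial data $\rho_0,c_0,u_0,\theta_0$, $E_0=u_0^2/2+c_v(c_0)\theta_0$, and $\sigma_0=\sigma|_{t=0}$. *)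

theory Defs
  imports "HOL-Analysis.Analysis"
begin

text \<open>Fields are functions f t x of time t and space x (x in R, 1-periodic,
  representing the torus R/Z identified with [0,1)).\<close>

definition pdt :: "(real \<Rightarrow> real \<Rightarrow> real) \<Rightarrow> real \<Rightarrow> real \<Rightarrow> real" where
  "pdt f t x = deriv (\<lambda>s. f s x) t"

definition pdx :: "(real \<Rightarrow> real \<Rightarrow> real) \<Rightarrow> real \<Rightarrow> real \<Rightarrow> real" where
  "pdx f t x = deriv (\<lambda>y. f t y) x"

fun pdi :: "bool list \<Rightarrow> (real \<Rightarrow> real \<Rightarrow> real) \<Rightarrow> real \<Rightarrow> real \<Rightarrow> real" where
  "pdi [] f = f"
| "pdi (b # bs) f = (if b then pdt (pdi bs f) else pdx (pdi bs f))"

definition smooth_on2 :: "(real \<times> real) set \<Rightarrow> (real \<Rightarrow> real \<Rightarrow> real) \<Rightarrow> bool" where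
  "smooth_on2 U f \<longleftrightarrow>
     (\<forall>bs. continuous_on U (\<lambda>p. pdi bs f (fst p) (snd p)) \<and>
       (\<forall>p\<in>U. (\<lambda>s. pdi bs f s (snd p)) differentiable (at (fst p)) \<and>
               (\<lambda>y. pdi bs f (fst p) y) differentiable (at (snd p))))"

definition mix :: "real \<Rightarrow> real \<Rightarrow> real \<Rightarrow> real" where
  "mix ap am c = c * ap + (1 - c) * am"

definition pressure :: "real \<Rightarrow> real \<Rightarrow> (real \<Rightarrow> real \<Rightarrow> real) \<Rightarrow> (real \<Rightarrow> real \<Rightarrow> real)
   \<Rightarrow> (real \<Rightarrow> real \<Rightarrow> real) \<Rightarrow> real \<Rightarrow> real \<Rightarrow> real" where
  "pressure gp gm c \<rho> \<theta> t x = (mix gp gm (c t x) - 1) * \<rho> t x * \<theta> t x"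

definition stress :: "real \<Rightarrow> real \<Rightarrow> real \<Rightarrow> real \<Rightarrow> (real \<Rightarrow> real \<Rightarrow> real) \<Rightarrow> (real \<Rightarrow> real \<Rightarrow> real)
   \<Rightarrow> (real \<Rightarrow> real \<Rightarrow> real) \<Rightarrow> (real \<Rightarrow> real \<Rightarrow> real) \<Rightarrow> real \<Rightarrow> real \<Rightarrow> real" where
  "stress mp mm gp gm c \<rho> \<theta> u t x =
     mix mp mm (c t x) * pdx u t x - pressure gp gm c \<rho> \<theta> t x"

definition energy :: "real \<Rightarrow> real \<Rightarrow> (real \<Rightarrow> real \<Rightarrow> real) \<Rightarrow> (real \<Rightarrow> real \<Rightarrow> real)
   \<Rightarrow> (real \<Rightarrow> real \<Rightarrow> real) \<Rightarrow> real \<Rightarrow> real \<Rightarrow> real" where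
  "energy cp cm c \<theta> u t x = (u t x)\<^sup>2 / 2 + mix cp cm (c t x) * \<theta> t x"

definition NS_solution where
  "NS_solution mp mm gp gm cp cm T c \<rho> \<theta> u \<longleftrightarrow>
    (\<exists>U. open U \<and> {0..T} \<times> UNIV \<subseteq> U \<and>
       smooth_on2 U c \<and> smooth_on2 U \<rho> \<and> smooth_on2 U \<theta> \<and> smooth_on2 U u) \<and>
    (\<forall>t x. c t (x + 1) = c t x \<and> \<rho> t (x + 1) = \<rho> t x \<and>
           \<theta> t (x + 1) = \<theta> t x \<and> u t (x + 1) = u t x) \<and>
    (let \<sigma> = stress mp mm gp gm c \<rho> \<theta> u; E = energy cp cm c \<theta> u in
     \<forall>t\<in>{0..T}. \<forall>x.
       pdt \<rho> t x + pdx (\<lambda>t x. \<rho> t x * u t x) t x = 0 \<and>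
       pdt (\<lambda>t x. \<rho> t x * c t x) t x + pdx (\<lambda>t x. \<rho> t x * c t x * u t x) t x = 0 \<and>
       pdt (\<lambda>t x. \<rho> t x * u t x) t x + pdx (\<lambda>t x. \<rho> t x * (u t x)\<^sup>2) t x = pdx \<sigma> t x \<and>
       pdt (\<lambda>t x. \<rho> t x * E t x) t x + pdx (\<lambda>t x. \<rho> t x * E t x * u t x) t x
         = pdx (\<lambda>t x. \<sigma> t x * u t x) t x)"

end

theory Submission
  imports Defs
begin

text \<open>
  Let \<open>\<sigma> = \<mu>(c) \<partial>\<^sub>x u - p\<close> be the effective viscous flux. Combining all four equations,
  \<open>\<sigma>\<^sup>2 / \<mu>\<close> obeys a conservation law whose source is the dissipation \<open>-2 \<sigma>\<^sub>x\<^sup>2 / \<rho>\<close> plus a term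
  \<open>O(\<bar>\<sigma>\<bar>\<^sup>3)\<close>. The one-dimensional Sobolev bound \<open>sup \<sigma>\<^sup>2 \<le> 2 \<integral>\<sigma>\<^sup>2 + \<integral>\<sigma>\<^sub>x\<^sup>2\<close> and Young's
  inequality then give, for \<open>Y = \<integral>\<sigma>\<^sup>2 / \<mu>\<close>,
  \<open>Y' \<le> - \<integral>\<sigma>\<^sub>x\<^sup>2 / \<rho>\<^sub>+ + (a + b S') Y\<close>, where \<open>S = \<integral>\<rho> s\<close> is the total entropy:
  \<open>S' = \<integral>\<mu> (\<partial>\<^sub>x u)\<^sup>2 / \<theta> \<ge> 0\<close>, the bounds on \<open>\<rho>\<close> and \<open>\<theta>\<close> bound \<open>\<bar>S\<bar>\<close>, and they also give
  \<open>\<integral>\<sigma>\<^sup>2 \<le> \<alpha> S' + \<beta>\<close>. Gronwall's lemma bounds \<open>Y\<close>, hence \<open>\<integral>(\<partial>\<^sub>x u)\<^sup>2\<close> because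
  \<open>\<partial>\<^sub>x u = (\<sigma> + p) / \<mu>\<close>. Integrating the differential inequality in time bounds
  \<open>\<integral>\<^sub>0\<^sup>T \<integral>\<sigma>\<^sub>x\<^sup>2\<close>, and the Sobolev bound turns this into a bound on
  \<open>\<integral>\<^sub>0\<^sup>T sup \<bar>\<partial>\<^sub>x u\<bar>\<^sup>2\<close>.
\<close>

section \<open>Partial derivatives of smooth fields\<close>

lemma smooth_on2_continuous_pdi:
  "smooth_on2 U f \<Longrightarrow> continuous_on U (\<lambda>p. pdi bs f (fst p) (snd p))"
  unfolding smooth_on2_def by blast

lemma smooth_on2_has_pdt:
  assumes "smooth_on2 U f" "(t, x) \<in> U"
  shows "((\<lambda>s. pdi bs f s x) has_real_derivative pdi (True # bs) f t x) (at t)"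
proof -
  have "(\<lambda>s. pdi bs f s x) differentiable (at t)"
    using assms unfolding smooth_on2_def by (metis fst_conv snd_conv)
  then show ?thesis
    by (simp add: pdt_def DERIV_deriv_iff_real_differentiable)
qed

lemma smooth_on2_has_pdx:
  assumes "smooth_on2 U f" "(t, x) \<in> U"
  shows "((\<lambda>y. pdi bs f t y) has_real_derivative pdi (False # bs) f t x) (at x)"
proof -
  have "(\<lambda>y. pdi bs f t y) differentiable (at x)"
    using assms unfolding smooth_on2_def by (metis fst_conv snd_conv)
  then show ?thesis
    by (simp add: pdx_def DERIV_deriv_iff_real_differentiable)
qed

lemma smooth_on2_continuous_on_slice:
  assumes "smooth_on2 U f" "{t} \<times> S \<subseteq> U"
  shows "continuous_on S (\<lambda>z. pdi bs f t z)"
proof -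
  have "continuous_on S (\<lambda>z. pdi bs f (fst (t, z)) (snd (t, z)))"
    by (rule continuous_on_compose2[OF smooth_on2_continuous_pdi[OF assms(1)]])
       (use assms(2) in \<open>auto intro!: continuous_intros\<close>)
  then show ?thesis by simp
qed

lemma pdx_eqI: "((\<lambda>y. f t y) has_real_derivative D) (at x) \<Longrightarrow> pdx f t x = D"
  unfolding pdx_def by (rule DERIV_imp_deriv)

lemma pdt_eqI: "((\<lambda>s. f s x) has_real_derivative D) (at t) \<Longrightarrow> pdt f t x = D"
  unfolding pdt_def by (rule DERIV_imp_deriv)

lemma deriv_periodic:
  fixes g :: "real \<Rightarrow> real"
  assumes "\<And>y. g (y + 1) = g y"
  shows "deriv g (x + 1) = deriv g x"
proof -
  have "(g has_field_derivative D) (at (x + 1)) \<longleftrightarrow> (g has_field_derivative D) (at x)" for D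
    using DERIV_shift[of g D x 1] assms by simp
  then show ?thesis unfolding deriv_def by simp
qed

lemma pdi_periodic:
  assumes "\<And>t x. f t (x + 1) = f t x"
  shows "pdi bs f t (x + 1) = pdi bs f t x"
  using assms
proof (induction bs arbitrary: t x)
  case Nil then show ?case by simp
next
  case (Cons b bs)
  show ?case
  proof (cases b)
    case True
    have "(\<lambda>s. pdi bs f s (x + 1)) = (\<lambda>s. pdi bs f s x)" using Cons by auto
    then show ?thesis using True by (simp add: pdt_def)
  next
    case False
    then show ?thesis using Cons deriv_periodic[of "\<lambda>y. pdi bs f t y" x]
      by (simp add: pdx_def)
  qed
qed

lemma smooth_on2_has_integral_pdx:
  assumes sm: "smooth_on2 U f" and inU: "\<And>z. (t, z) \<in> U" and ay: "a \<le> y"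
  shows "((\<lambda>z. pdi (False # bs) f t z) has_integral (pdi bs f t y - pdi bs f t a)) {a..y}"
proof (rule fundamental_theorem_of_calculus[OF ay])
  fix z
  show "((\<lambda>z. pdi bs f t z) has_vector_derivative pdi (False # bs) f t z) (at z within {a..y})"
    using smooth_on2_has_pdx[OF sm inU[of z], of bs]
    by (simp add: has_real_derivative_iff_has_vector_derivative[symmetric]
        has_field_derivative_at_within)
qed

lemma smooth_on2_integral_pdt_pdx:
  assumes sm: "smooth_on2 U f" and sub: "{0..T} \<times> UNIV \<subseteq> U" and T: "T > 0"
    and t: "t \<in> {0..T}" and ay: "a \<le> y"
  shows "integral {a..y} (\<lambda>z. pdi [True, False] f t z) = pdi [True] f t y - pdi [True] f t a"
proof -
  have inU: "(s, z) \<in> U" if "s \<in> {0..T}" for s z using sub that by auto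
  define H where "H s = integral (cbox a y) (\<lambda>z. pdi [False] f s z)" for s
  have H1: "(H has_field_derivative integral (cbox a y) (\<lambda>z. pdi [True, False] f t z))
          (at t within {0..T})"
    unfolding H_def
  proof (rule leibniz_rule_field_derivative)
    fix s z assume s: "s \<in> {0..T}" and "z \<in> cbox a y"
    show "((\<lambda>s. pdi [False] f s z) has_field_derivative pdi [True, False] f s z) (at s within {0..T})"
      using smooth_on2_has_pdt[OF sm inU[OF s], of "[False]"]
      by (simp add: has_field_derivative_at_within)
  next
    fix s assume s: "s \<in> {0..T}"
    show "(\<lambda>z. pdi [False] f s z) integrable_on cbox a y"
      by (rule integrable_continuous) (rule smooth_on2_continuous_on_slice[OF sm], use inU s in auto)
  next
    have "continuous_on ({0..T} \<times> cbox a y) (\<lambda>p. pdi [True, False] f (fst p) (snd p))"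
      by (rule continuous_on_subset[OF smooth_on2_continuous_pdi[OF sm]]) (use inU in auto)
    then show "continuous_on ({0..T} \<times> cbox a y) (\<lambda>(s, z). pdi [True, False] f s z)"
      by (simp add: split_beta)
  qed (use t in auto)
  have H2: "(H has_field_derivative (pdi [True] f t y - pdi [True] f t a)) (at t within {0..T})"
  proof -
    have Hs: "H s = f s y - f s a" if s: "s \<in> {0..T}" for s
    proof -
      have "((\<lambda>z. pdi [False] f s z) has_integral (pdi [] f s y - pdi [] f s a)) {a..y}"
        using smooth_on2_has_integral_pdx[OF sm inU[OF s] ay] .
      then show ?thesis unfolding H_def by (simp add: integral_unique)
    qed
    have deriv: "((\<lambda>s. f s y - f s a) has_field_derivative (pdi [True] f t y - pdi [True] f t a))
            (at t within {0..T})"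
      using has_field_derivative_at_within[OF DERIV_diff[OF
          smooth_on2_has_pdt[OF sm inU[OF t], of "[]" y] smooth_on2_has_pdt[OF sm inU[OF t], of "[]" a]]]
      by simp
    show ?thesis
      by (rule has_field_derivative_transform_within[OF deriv, where d=1]) (use Hs t in auto)
  qed
  have "integral (cbox a y) (\<lambda>z. pdi [True, False] f t z) = pdi [True] f t y - pdi [True] f t a"
    by (rule vector_derivative_unique_within_closed_interval[of 0 T t H])
       (use H1 H2 T t in \<open>auto simp: has_real_derivative_iff_has_vector_derivative\<close>)
  then show ?thesis by simp
qed

lemma continuous_zero_if_integrals_zero:
  fixes g :: "real \<Rightarrow> real"
  assumes ab: "a < b" "x \<in> {a..b}" and g: "continuous_on {a..b} g"
    and zero: "\<And>y. y \<in> {a..b} \<Longrightarrow> integral {a..y} g = 0"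
  shows "g x = 0"
proof -
  have "((\<lambda>y. integral {a..y} g) has_real_derivative g x) (at x within {a..b})"
    by (rule integral_has_real_derivative[OF g]) (use ab in auto)
  moreover have "((\<lambda>y. integral {a..y} g) has_real_derivative 0) (at x within {a..b})"
    by (rule has_field_derivative_transform_within[of "\<lambda>_. 0" 0 x "{a..b}" 1])
       (use ab zero in auto)
  ultimately show ?thesis
    using vector_derivative_unique_within_closed_interval[of a b x "\<lambda>y. integral {a..y} g"] ab
    by (auto simp: has_real_derivative_iff_has_vector_derivative)
qed

lemma smooth_on2_pdt_pdx_commute:
  assumes sm: "smooth_on2 U f" and sub: "{0..T} \<times> UNIV \<subseteq> U" and T: "T > 0"
    and t: "t \<in> {0..T}"
  shows "pdi [True, False] f t x = pdi [False, True] f t x"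
proof -
  have inU: "(t, z) \<in> U" for z using sub t by auto
  define g where "g z = pdi [True, False] f t z - pdi [False, True] f t z" for z
  have cont: "continuous_on S (\<lambda>z. pdi bs f t z)" for S bs
    by (rule smooth_on2_continuous_on_slice[OF sm]) (use inU in auto)
  have "g x = 0"
  proof (rule continuous_zero_if_integrals_zero[where a = "x - 1" and b = "x + 1" and g = g])
    show "continuous_on {x - 1..x + 1} g" unfolding g_def
      by (intro continuous_intros smooth_on2_continuous_on_slice[OF sm]) (use inU in auto)
    fix y assume y: "y \<in> {x - 1..x + 1}"
    have "((\<lambda>z. pdi [False, True] f t z) has_integral (pdi [True] f t y - pdi [True] f t (x - 1)))
            {x - 1..y}"
      using smooth_on2_has_integral_pdx[OF sm inU, of "x - 1" y "[True]"] y by simp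
    then show "integral {x - 1..y} g = 0"
      unfolding g_def
      using smooth_on2_integral_pdt_pdx[OF sm sub T t, of "x - 1" y] y
      by (subst integral_diff[OF integrable_continuous_interval[OF cont]
            integrable_continuous_interval[OF cont]]) (auto simp: integral_unique)
  qed auto
  then show ?thesis by (simp add: g_def)
qed

section \<open>Elementary inequalities\<close>

lemma mix_bounds:
  assumes "0 \<le> s" "s \<le> 1"
  shows "min a b \<le> mix a b s \<and> mix a b s \<le> max a b"
proof -
  have "s * min a b \<le> s * a" "(1 - s) * min a b \<le> (1 - s) * b"
       "s * a \<le> s * max a b" "(1 - s) * b \<le> (1 - s) * max a b"
    using assms by (auto intro!: mult_left_mono)
  then have "s * min a b + (1 - s) * min a b \<le> mix a b s"
    "mix a b s \<le> s * max a b + (1 - s) * max a b"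
    unfolding mix_def by linarith+
  then show ?thesis by (simp add: algebra_simps)
qed

lemma abs_ln_le:
  assumes "0 < (a::real)" "a \<le> z" "z \<le> b"
  shows "\<bar>ln z\<bar> \<le> \<bar>ln a\<bar> + \<bar>ln b\<bar>"
proof -
  have "ln a \<le> ln z" "ln z \<le> ln b" using assms by simp_all
  then show ?thesis by linarith
qed

lemma integral_le_continuous:
  fixes f g :: "real \<Rightarrow> real"
  shows "continuous_on {a..b} f \<Longrightarrow> continuous_on {a..b} g \<Longrightarrow> (\<And>x. x \<in> {a..b} \<Longrightarrow> f x \<le> g x)
    \<Longrightarrow> integral {a..b} f \<le> integral {a..b} g"
  by (rule integral_le) (auto intro: integrable_continuous_interval)

lemma integral_nonneg_continuous:
  fixes f :: "real \<Rightarrow> real"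
  shows "continuous_on {a..b} f \<Longrightarrow> (\<And>x. x \<in> {a..b} \<Longrightarrow> 0 \<le> f x) \<Longrightarrow> 0 \<le> integral {a..b} f"
  by (rule integral_nonneg) (auto intro: integrable_continuous_interval)

lemma has_integral_add_periodic_deriv:
  fixes f g G :: "real \<Rightarrow> real"
  assumes f: "(f has_integral I) {0..1}"
    and G: "\<And>x. (G has_real_derivative g x) (at x)" and per: "G 1 = G 0"
  shows "((\<lambda>x. f x + g x) has_integral I) {0..1}"
proof -
  have "(g has_integral (G 1 - G 0)) {0..1}"
    by (rule fundamental_theorem_of_calculus)
       (auto intro: has_field_derivative_at_within[OF G]
         simp: has_real_derivative_iff_has_vector_derivative[symmetric])
  then show ?thesis using has_integral_add[OF f] per by fastforce
qed

lemma has_real_derivative_integral_unit: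
  fixes F F' :: "real \<Rightarrow> real \<Rightarrow> real"
  assumes t: "t \<in> {0..T}"
    and F: "\<And>s x. s \<in> {0..T} \<Longrightarrow> ((\<lambda>s. F s x) has_real_derivative F' s x) (at s)"
    and cont: "\<And>s. s \<in> {0..T} \<Longrightarrow> continuous_on {0..1} (F s)"
    and cont': "continuous_on ({0..T} \<times> {0..1}) (\<lambda>(s, x). F' s x)"
  shows "((\<lambda>s. integral {0..1} (F s)) has_real_derivative integral {0..1} (F' t)) (at t within {0..T})"
proof -
  have "((\<lambda>s. integral (cbox 0 1) (\<lambda>x. F s x)) has_field_derivative integral (cbox 0 1) (\<lambda>x. F' t x))
      (at t within {0..T})"
  proof (rule leibniz_rule_field_derivative)
    fix s x assume s: "s \<in> {0..T}"
    show "((\<lambda>s. F s x) has_field_derivative F' s x) (at s within {0..T})"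
      by (rule has_field_derivative_at_within[OF F[OF s]])
  next
    fix s assume s: "s \<in> {0..T}"
    show "(\<lambda>x. F s x) integrable_on cbox 0 1"
      using integrable_continuous_interval[OF cont[OF s]] by simp
  qed (use t cont' in auto)
  then show ?thesis by simp
qed

lemma sq_add_le: "((a::real) + b)\<^sup>2 \<le> 2 * a\<^sup>2 + 2 * b\<^sup>2"
proof -
  have "0 \<le> (a - b)\<^sup>2" by simp
  then show ?thesis by (simp add: power2_eq_square algebra_simps)
qed

text \<open>Young's inequality for the cubic term: with \<open>M\<^sup>2 = 2 Z + W\<close> (a Sobolev bound for
  \<open>sup \<bar>\<sigma>\<bar>\<close>), half of the dissipation \<open>W\<close> absorbs \<open>K M Z\<close> at the price of a term \<open>Z\<^sup>2\<close>.\<close>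

lemma young_cubic_le:
  fixes K M Z W r :: real
  assumes r: "0 < r" and M: "M\<^sup>2 = 2 * Z + W" and W: "0 \<le> W"
  shows "- (2 / r) * W + K * M * Z \<le> - (1 / r) * W + (1 / r) * Z + (r * K\<^sup>2 / 2) * Z\<^sup>2"
proof -
  have "0 \<le> (M - r * K * Z)\<^sup>2" by simp
  then have "2 * r * (K * M * Z) \<le> 2 * Z + W + r\<^sup>2 * K\<^sup>2 * Z\<^sup>2"
    unfolding M[symmetric] by (simp add: power2_eq_square algebra_simps)
  then have "K * M * Z \<le> (2 * Z + W + r\<^sup>2 * K\<^sup>2 * Z\<^sup>2) / (2 * r)"
    using r by (simp add: field_simps)
  also have "\<dots> = (1 / r) * Z + (1 / (2 * r)) * W + (r * K\<^sup>2 / 2) * Z\<^sup>2"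
    using r by (simp add: field_simps power2_eq_square)
  finally have "K * M * Z \<le> (1 / r) * Z + (1 / (2 * r)) * W + (r * K\<^sup>2 / 2) * Z\<^sup>2" .
  moreover have "(1 / (2 * r)) * W \<le> (1 / r) * W"
    using r W by (intro mult_right_mono) (auto simp: field_simps)
  ultimately show ?thesis by linarith
qed

lemma nonincreasing_if_deriv_nonpos_within:
  fixes g g' :: "real \<Rightarrow> real"
  assumes "a \<le> b"
    and "\<And>s. s \<in> {a..b} \<Longrightarrow> (g has_real_derivative g' s) (at s within {a..b})"
    and "\<And>s. s \<in> {a..b} \<Longrightarrow> g' s \<le> 0"
  shows "g b \<le> g a"
proof -
  have "(g' has_integral (g b - g a)) {a..b}"
    by (rule fundamental_theorem_of_calculus)
       (use assms in \<open>auto simp: has_real_derivative_iff_has_vector_derivative[symmetric]\<close>)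
  then have "g b - g a \<le> 0"
    by (rule has_integral_le[OF _ has_integral_0]) (use assms in auto)
  then show ?thesis by simp
qed

lemma integral_le_if_le_deriv:
  fixes h f F :: "real \<Rightarrow> real"
  assumes "a \<le> b"
    and F: "\<And>s. s \<in> {a..b} \<Longrightarrow> (F has_real_derivative f s) (at s within {a..b})"
    and h: "\<And>s. s \<in> {a..b} \<Longrightarrow> 0 \<le> h s" "\<And>s. s \<in> {a..b} \<Longrightarrow> h s \<le> f s"
  shows "integral {a..b} h \<le> F b - F a"
proof -
  have f: "(f has_integral (F b - F a)) {a..b}"
    by (rule fundamental_theorem_of_calculus)
       (use assms in \<open>auto simp: has_real_derivative_iff_has_vector_derivative[symmetric]\<close>)
  show ?thesis
  proof (cases "h integrable_on {a..b}")
    case True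
    then show ?thesis using has_integral_le[OF integrable_integral[OF True] f] h by simp
  next
    case False
    have "0 \<le> F b - F a"
      by (rule has_integral_nonneg[OF f]) (use h in \<open>auto intro: order_trans\<close>)
    then show ?thesis using False by (simp add: not_integrable_integral)
  qed
qed

lemma abs_sq_diff_le_integral:
  fixes f f' :: "real \<Rightarrow> real"
  assumes D: "\<And>x. (f has_real_derivative f' x) (at x)" and c: "continuous_on {a..b} f'"
    and ab: "a \<le> b"
  shows "\<bar>(f b)\<^sup>2 - (f a)\<^sup>2\<bar> \<le> integral {a..b} (\<lambda>y. (f y)\<^sup>2 + (f' y)\<^sup>2)"
proof -
  have fc: "continuous_on {a..b} f"
    by (rule DERIV_continuous_on) (rule has_field_derivative_at_within[OF D])
  have gi: "((\<lambda>z. 2 * f z * f' z) has_integral ((f b)\<^sup>2 - (f a)\<^sup>2)) {a..b}"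
  proof (rule fundamental_theorem_of_calculus[OF ab])
    fix z
    have "((\<lambda>z. (f z)\<^sup>2) has_real_derivative 2 * f z * f' z) (at z)"
      by (rule derivative_eq_intros D refl)+ simp
    then show "((\<lambda>z. (f z)\<^sup>2) has_vector_derivative 2 * f z * f' z) (at z within {a..b})"
      by (simp add: has_real_derivative_iff_has_vector_derivative[symmetric]
          has_field_derivative_at_within)
  qed
  have "norm (integral {a..b} (\<lambda>z. 2 * f z * f' z)) \<le> integral {a..b} (\<lambda>y. (f y)\<^sup>2 + (f' y)\<^sup>2)"
  proof (rule integral_norm_bound_integral)
    show "(\<lambda>z. 2 * f z * f' z) integrable_on {a..b}" using gi by blast
    show "(\<lambda>y. (f y)\<^sup>2 + (f' y)\<^sup>2) integrable_on {a..b}"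
      by (intro integrable_continuous_interval continuous_intros fc c)
    fix z
    have "0 \<le> (\<bar>f z\<bar> - \<bar>f' z\<bar>)\<^sup>2" by simp
    then show "norm (2 * f z * f' z) \<le> (f z)\<^sup>2 + (f' z)\<^sup>2"
      by (simp add: abs_mult power2_eq_square algebra_simps)
  qed
  then show ?thesis using gi by (simp add: integral_unique)
qed

text \<open>The one-dimensional Sobolev embedding: compare \<open>f x\<close> with a minimum point of \<open>f\<^sup>2\<close>.\<close>

lemma sq_le_integral_sq_deriv_sq:
  fixes f f' :: "real \<Rightarrow> real"
  assumes D: "\<And>x. (f has_real_derivative f' x) (at x)" and c: "continuous_on {0..1} f'"
    and x: "x \<in> {0..1}"
  shows "(f x)\<^sup>2 \<le> 2 * integral {0..1} (\<lambda>y. (f y)\<^sup>2) + integral {0..1} (\<lambda>y. (f' y)\<^sup>2)"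
proof -
  have fc: "continuous_on {0..1} f"
    by (rule DERIV_continuous_on) (rule has_field_derivative_at_within[OF D])
  have f2c: "continuous_on {0..1} (\<lambda>y. (f y)\<^sup>2)" by (intro continuous_intros fc)
  have hc: "continuous_on {0..1} (\<lambda>y. (f y)\<^sup>2 + (f' y)\<^sup>2)" by (intro continuous_intros fc c)
  obtain y where y: "y \<in> {0..1}" and ymin: "\<And>z. z \<in> {0..1} \<Longrightarrow> (f y)\<^sup>2 \<le> (f z)\<^sup>2"
    using continuous_attains_inf[OF compact_Icc _ f2c] by auto
  have "(f y)\<^sup>2 \<le> integral {0..1} (\<lambda>y. (f y)\<^sup>2)"
    using integral_le_continuous[of 0 1 "\<lambda>_. (f y)\<^sup>2" "\<lambda>z. (f z)\<^sup>2"] ymin f2c by simp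
  moreover have "\<bar>(f x)\<^sup>2 - (f y)\<^sup>2\<bar> \<le> integral {0..1} (\<lambda>y. (f y)\<^sup>2 + (f' y)\<^sup>2)"
  proof -
    have sub: "{min x y..max x y} \<subseteq> {0..1}" using x y by auto
    have "\<bar>(f x)\<^sup>2 - (f y)\<^sup>2\<bar> = \<bar>(f (max x y))\<^sup>2 - (f (min x y))\<^sup>2\<bar>"
      by (cases "y \<le> x") (simp_all add: max_def min_def abs_minus_commute)
    also have "\<dots> \<le> integral {min x y..max x y} (\<lambda>y. (f y)\<^sup>2 + (f' y)\<^sup>2)"
      by (rule abs_sq_diff_le_integral[OF D continuous_on_subset[OF c sub]]) simp
    also have "\<dots> \<le> integral {0..1} (\<lambda>y. (f y)\<^sup>2 + (f' y)\<^sup>2)"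
      by (rule integral_subset_le[OF sub])
         (use hc in \<open>auto intro: integrable_continuous_interval continuous_on_subset[OF hc sub]\<close>)
    finally show ?thesis .
  qed
  moreover have "integral {0..1} (\<lambda>y. (f y)\<^sup>2 + (f' y)\<^sup>2)
      = integral {0..1} (\<lambda>y. (f y)\<^sup>2) + integral {0..1} (\<lambda>y. (f' y)\<^sup>2)"
    by (rule integral_add) (intro integrable_continuous_interval continuous_intros fc c)+
  ultimately show ?thesis by linarith
qed

lemma gronwall_exp_bound:
  fixes Y S Y' S' :: "real \<Rightarrow> real"
  assumes T: "t \<in> {0..T}" and a1: "a1 \<ge> 0" and b1: "b1 \<ge> 0"
    and DY: "\<And>t. t \<in> {0..T} \<Longrightarrow> (Y has_real_derivative Y' t) (at t within {0..T})"
    and DS: "\<And>t. t \<in> {0..T} \<Longrightarrow> (S has_real_derivative S' t) (at t within {0..T})"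
    and IY: "\<And>t. t \<in> {0..T} \<Longrightarrow> Y' t \<le> (a1 + b1 * S' t) * Y t"
    and Sb: "\<And>t. t \<in> {0..T} \<Longrightarrow> \<bar>S t\<bar> \<le> Sm"
    and Y0: "Y 0 \<le> Y0" "0 \<le> Y0"
  shows "Y t \<le> Y0 * exp (a1 * T + 2 * b1 * Sm)"
proof -
  define E where "E s = exp (- (a1 * s + b1 * S s))" for s
  have "Y t * E t \<le> Y 0 * E 0"
  proof (rule nonincreasing_if_deriv_nonpos_within[where g = "\<lambda>s. Y s * E s" and a = 0 and b = t])
    fix s assume s: "s \<in> {0..t}"
    then have sT: "s \<in> {0..T}" using T by auto
    have "((\<lambda>s. Y s * E s) has_real_derivative E s * (Y' s - (a1 + b1 * S' s) * Y s))
        (at s within {0..T})"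
      unfolding E_def
      by (rule derivative_eq_intros DY[OF sT] DS[OF sT] refl)+ (simp add: algebra_simps)
    then show "((\<lambda>s. Y s * E s) has_real_derivative E s * (Y' s - (a1 + b1 * S' s) * Y s))
        (at s within {0..t})"
      by (rule has_field_derivative_subset) (use T in auto)
    show "E s * (Y' s - (a1 + b1 * S' s) * Y s) \<le> 0"
      using IY[OF sT] by (simp add: E_def mult_nonneg_nonpos)
  qed (use T in auto)
  then have "Y t * E t * exp (a1 * t + b1 * S t) \<le> Y 0 * E 0 * exp (a1 * t + b1 * S t)"
    by (rule mult_right_mono) simp
  then have "Y t \<le> Y 0 * exp (a1 * t + b1 * S t - b1 * S 0)"
    by (simp add: E_def mult.assoc exp_add[symmetric] exp_diff)
  also have "\<dots> \<le> Y0 * exp (a1 * T + 2 * b1 * Sm)"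
  proof (rule mult_mono)
    have "b1 * S t \<le> b1 * Sm" "- (b1 * S 0) \<le> b1 * Sm" "a1 * t \<le> a1 * T"
      using Sb[OF T] Sb[of 0] T b1 a1 by (auto intro!: mult_left_mono simp: abs_le_iff)
        (smt (verit) mult_minus_right mult_left_mono)
    then show "exp (a1 * t + b1 * S t - b1 * S 0) \<le> exp (a1 * T + 2 * b1 * Sm)" by simp
  qed (use Y0 in auto)
  finally show ?thesis .
qed

text \<open>Integrating the differential inequality for \<open>Y\<close> in time turns the bound on \<open>Y\<close> into
  a bound on the time integral of the dissipation \<open>W\<close>.\<close>

lemma integral_le_dissipation_bound:
  fixes Y S Y' S' W h :: "real \<Rightarrow> real"
  assumes T: "T \<ge> 0" and w: "w > 0" and a1: "a1 \<ge> 0" and b1: "b1 \<ge> 0"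
    and e: "e1 \<ge> 0" "e2 \<ge> 0" "e3 \<ge> 0"
    and DY: "\<And>t. t \<in> {0..T} \<Longrightarrow> (Y has_real_derivative Y' t) (at t within {0..T})"
    and DS: "\<And>t. t \<in> {0..T} \<Longrightarrow> (S has_real_derivative S' t) (at t within {0..T})"
    and IY: "\<And>t. t \<in> {0..T} \<Longrightarrow> Y' t \<le> - w * W t + (a1 + b1 * S' t) * Y t"
    and S'pos: "\<And>t. t \<in> {0..T} \<Longrightarrow> 0 \<le> S' t"
    and Yb: "\<And>t. t \<in> {0..T} \<Longrightarrow> 0 \<le> Y t \<and> Y t \<le> Ym"
    and Sb: "\<And>t. t \<in> {0..T} \<Longrightarrow> \<bar>S t\<bar> \<le> Sm" and Y0: "Y 0 \<le> Y0"
    and h: "\<And>t. t \<in> {0..T} \<Longrightarrow> 0 \<le> h t \<and> h t \<le> e1 * S' t + e2 * W t + e3"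
  shows "integral {0..T} h
    \<le> (e1 + e2 * b1 * Ym / w) * (2 * Sm) + (e2 / w) * Y0 + (e3 + e2 * a1 * Ym / w) * T"
proof -
  define K1 where "K1 = e1 + e2 * b1 * Ym / w"
  define K3 where "K3 = e3 + e2 * a1 * Ym / w"
  have K1: "K1 \<ge> 0" using e b1 Yb[of 0] w T by (auto simp: K1_def)
  have "integral {0..T} h
      \<le> (K1 * S T - (e2 / w) * Y T + K3 * T) - (K1 * S 0 - (e2 / w) * Y 0 + K3 * 0)"
  proof (rule integral_le_if_le_deriv[OF T])
    fix s assume s: "s \<in> {0..T}"
    show "((\<lambda>s. K1 * S s - (e2 / w) * Y s + K3 * s) has_real_derivative
        K1 * S' s - (e2 / w) * Y' s + K3) (at s within {0..T})"
      by (rule derivative_eq_intros DY[OF s] DS[OF s] refl)+ simp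
    show "0 \<le> h s" using h[OF s] by simp
    have "w * W s \<le> (a1 + b1 * S' s) * Ym - Y' s"
      using IY[OF s] Yb[OF s] a1 b1 S'pos[OF s] mult_left_mono[of "Y s" Ym "a1 + b1 * S' s"]
      by simp
    then have "e2 * W s \<le> e2 * (((a1 + b1 * S' s) * Ym - Y' s) / w)"
      using w e by (intro mult_left_mono) (simp_all add: field_simps)
    also have "\<dots> = e2 * a1 * Ym / w + (e2 * b1 * Ym / w) * S' s - (e2 / w) * Y' s"
      using w by (simp add: field_simps)
    finally show "h s \<le> K1 * S' s - (e2 / w) * Y' s + K3"
      using h[OF s] unfolding K1_def K3_def by (simp add: algebra_simps)
  qed
  also have "\<dots> \<le> K1 * (2 * Sm) + (e2 / w) * Y0 + K3 * T"
  proof -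
    have "K1 * (S T - S 0) \<le> K1 * (2 * Sm)" using Sb[of T] Sb[of 0] T K1
      by (intro mult_left_mono) (auto simp: abs_le_iff)
    moreover have "(e2 / w) * Y T \<ge> 0" using Yb[of T] T e w by simp
    moreover have "(e2 / w) * Y 0 \<le> (e2 / w) * Y0" by (rule mult_left_mono) (use Y0 e w in auto)
    ultimately show ?thesis by (simp add: algebra_simps)
  qed
  finally show ?thesis unfolding K1_def K3_def .
qed

locale NS_constants =
  fixes mp mm gp gm cp cm T rl ru tl tu :: real
  assumes pos: "mp > 0" "mm > 0" "gp > 1" "gm > 1" "cp > 0" "cm > 0"
    "T > 0" "rl > 0" "ru > 0" "tl > 0" "tu > 0"
begin

abbreviation "visc_min \<equiv> min mp mm"
abbreviation "visc_max \<equiv> max mp mm"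

definition "pres_max = (max gp gm - 1) * ru * tu"
definition "cubic_coeff = (1 + 2 * (max gp gm - 1) / min cp cm) / visc_min\<^sup>2"
definition "young_coeff = ru * cubic_coeff\<^sup>2 / 2"
definition "alpha = 2 * visc_max\<^sup>2 * tu / visc_min"
definition "beta = 2 * pres_max\<^sup>2"
definition "entropy_max =
  ru * (max cp cm * (\<bar>ln tl\<bar> + \<bar>ln tu\<bar>) + (max gp gm - 1) * (\<bar>ln rl\<bar> + \<bar>ln ru\<bar>))"
definition "gron_a = visc_max * (1 / ru + young_coeff * beta)"
definition "gron_b = visc_max * young_coeff * alpha"
definition "sig_energy_0_max S0 = max S0 0 / visc_min"
definition "sig_energy_max S0 = sig_energy_0_max S0 * exp (gron_a * T + 2 * gron_b * entropy_max)"
text \<open>The summand \<open>1\<close> in \<open>C8\<close> and \<open>C9\<close> only makes the constants strictly positive.\<close>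

definition "C8 S0 = 2 * (visc_max * sig_energy_max S0 + pres_max\<^sup>2) / visc_min\<^sup>2 + 1"
definition "C9 S0 =
  (4 * alpha / visc_min\<^sup>2 + 2 / visc_min\<^sup>2 * gron_b * sig_energy_max S0 / (1 / ru)) * (2 * entropy_max)
  + (2 / visc_min\<^sup>2 / (1 / ru)) * sig_energy_0_max S0
  + ((4 * beta + 2 * pres_max\<^sup>2) / visc_min\<^sup>2
     + 2 / visc_min\<^sup>2 * gron_a * sig_energy_max S0 / (1 / ru)) * T + 1"

lemma visc_min_pos: "visc_min > 0" using pos by simp

lemma constants_nonneg:
  "cubic_coeff \<ge> 0" "young_coeff \<ge> 0" "alpha \<ge> 0" "beta \<ge> 0" "entropy_max \<ge> 0"
  "gron_a \<ge> 0" "gron_b \<ge> 0" "sig_energy_0_max S0 \<ge> 0" "sig_energy_max S0 \<ge> 0"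
  using pos
  by (auto simp: cubic_coeff_def young_coeff_def alpha_def beta_def entropy_max_def gron_a_def
      gron_b_def sig_energy_0_max_def sig_energy_max_def
      intro!: mult_nonneg_nonneg add_nonneg_nonneg divide_nonneg_pos)

lemma C8_pos: "C8 S0 > 0"
  unfolding C8_def using constants_nonneg pos
  by (intro add_nonneg_pos divide_nonneg_nonneg add_nonneg_nonneg mult_nonneg_nonneg) simp_all

lemma C9_pos: "C9 S0 > 0"
  unfolding C9_def using constants_nonneg visc_min_pos pos
  by (intro add_nonneg_pos add_nonneg_nonneg mult_nonneg_nonneg divide_nonneg_nonneg) simp_all

end

locale bounded_NS_solution = NS_constants +
  fixes c \<rho> \<theta> u :: "real \<Rightarrow> real \<Rightarrow> real" and U :: "(real \<times> real) set"
  assumes U: "{0..T} \<times> UNIV \<subseteq> U"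
    and sm: "smooth_on2 U c" "smooth_on2 U \<rho>" "smooth_on2 U \<theta>" "smooth_on2 U u"
    and per: "\<And>t x. c t (x + 1) = c t x \<and> \<rho> t (x + 1) = \<rho> t x \<and>
      \<theta> t (x + 1) = \<theta> t x \<and> u t (x + 1) = u t x"
    and eqs: "\<And>t x. t \<in> {0..T} \<Longrightarrow>
      pdt \<rho> t x + pdx (\<lambda>t x. \<rho> t x * u t x) t x = 0 \<and>
      pdt (\<lambda>t x. \<rho> t x * c t x) t x + pdx (\<lambda>t x. \<rho> t x * c t x * u t x) t x = 0 \<and>
      pdt (\<lambda>t x. \<rho> t x * u t x) t x + pdx (\<lambda>t x. \<rho> t x * (u t x)\<^sup>2) t x
        = pdx (stress mp mm gp gm c \<rho> \<theta> u) t x \<and>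
      pdt (\<lambda>t x. \<rho> t x * energy cp cm c \<theta> u t x) t x
        + pdx (\<lambda>t x. \<rho> t x * energy cp cm c \<theta> u t x * u t x) t x
        = pdx (\<lambda>t x. stress mp mm gp gm c \<rho> \<theta> u t x * u t x) t x"
    and bnd: "\<And>t x. t \<in> {0..T} \<Longrightarrow> 0 \<le> c t x \<and> c t x \<le> 1 \<and>
      rl \<le> \<rho> t x \<and> \<rho> t x \<le> ru \<and> tl \<le> \<theta> t x \<and> \<theta> t x \<le> tu"
begin

lemma in_U: "t \<in> {0..T} \<Longrightarrow> (t, x) \<in> U" using U by auto

lemma smooth_fields: "f \<in> {c, \<rho>, \<theta>, u} \<Longrightarrow> smooth_on2 U f" using sm by auto

lemma has_pdx_field: "f \<in> {c, \<rho>, \<theta>, u} \<Longrightarrow> t \<in> {0..T} \<Longrightarrow>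
   ((\<lambda>y. pdi bs f t y) has_real_derivative pdi (False # bs) f t x) (at x)"
  by (rule smooth_on2_has_pdx[OF smooth_fields in_U])
lemma has_pdt_field: "f \<in> {c, \<rho>, \<theta>, u} \<Longrightarrow> t \<in> {0..T} \<Longrightarrow>
   ((\<lambda>s. pdi bs f s x) has_real_derivative pdi (True # bs) f t x) (at t)"
  by (rule smooth_on2_has_pdt[OF smooth_fields in_U])
lemma continuous_field_pdi: "f \<in> {c, \<rho>, \<theta>, u} \<Longrightarrow> K \<subseteq> {0..T} \<times> UNIV \<Longrightarrow>
   continuous_on K (\<lambda>q. pdi bs f (fst q) (snd q))"
  by (rule continuous_on_subset[OF smooth_on2_continuous_pdi[OF smooth_fields]]) (use U in auto)

lemma has_pdx_c: "t \<in> {0..T} \<Longrightarrow> ((\<lambda>y. c t y) has_real_derivative pdx c t x) (at x)"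
  using has_pdx_field[where f=c and bs="[]" and t=t and x=x] by simp
lemma has_pdx_rho: "t \<in> {0..T} \<Longrightarrow> ((\<lambda>y. \<rho> t y) has_real_derivative pdx \<rho> t x) (at x)"
  using has_pdx_field[where f=\<rho> and bs="[]" and t=t and x=x] by simp
lemma has_pdx_theta: "t \<in> {0..T} \<Longrightarrow> ((\<lambda>y. \<theta> t y) has_real_derivative pdx \<theta> t x) (at x)"
  using has_pdx_field[where f=\<theta> and bs="[]" and t=t and x=x] by simp
lemma has_pdx_u: "t \<in> {0..T} \<Longrightarrow> ((\<lambda>y. u t y) has_real_derivative pdx u t x) (at x)"
  using has_pdx_field[where f=u and bs="[]" and t=t and x=x] by simp
lemma has_pdx_c_x: "t \<in> {0..T} \<Longrightarrow> ((\<lambda>y. (pdx c) t y) has_real_derivative pdx (pdx c) t x) (at x)"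
  using has_pdx_field[where f=c and bs="[False]" and t=t and x=x] by simp
lemma has_pdx_rho_x: "t \<in> {0..T} \<Longrightarrow> ((\<lambda>y. (pdx \<rho>) t y) has_real_derivative pdx (pdx \<rho>) t x) (at x)"
  using has_pdx_field[where f=\<rho> and bs="[False]" and t=t and x=x] by simp
lemma has_pdx_theta_x: "t \<in> {0..T} \<Longrightarrow> ((\<lambda>y. (pdx \<theta>) t y) has_real_derivative pdx (pdx \<theta>) t x) (at x)"
  using has_pdx_field[where f=\<theta> and bs="[False]" and t=t and x=x] by simp
lemma has_pdx_u_x: "t \<in> {0..T} \<Longrightarrow> ((\<lambda>y. (pdx u) t y) has_real_derivative pdx (pdx u) t x) (at x)"
  using has_pdx_field[where f=u and bs="[False]" and t=t and x=x] by simp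
lemma has_pdx_u_xx: "t \<in> {0..T} \<Longrightarrow> ((\<lambda>y. (pdx (pdx u)) t y) has_real_derivative pdx (pdx (pdx u)) t x) (at x)"
  using has_pdx_field[where f=u and bs="[False,False]" and t=t and x=x] by simp
lemma has_pdt_c: "t \<in> {0..T} \<Longrightarrow> ((\<lambda>s. c s x) has_real_derivative pdt c t x) (at t)"
  using has_pdt_field[where f=c and bs="[]" and t=t and x=x] by simp
lemma has_pdt_rho: "t \<in> {0..T} \<Longrightarrow> ((\<lambda>s. \<rho> s x) has_real_derivative pdt \<rho> t x) (at t)"
  using has_pdt_field[where f=\<rho> and bs="[]" and t=t and x=x] by simp
lemma has_pdt_theta: "t \<in> {0..T} \<Longrightarrow> ((\<lambda>s. \<theta> s x) has_real_derivative pdt \<theta> t x) (at t)"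
  using has_pdt_field[where f=\<theta> and bs="[]" and t=t and x=x] by simp
lemma has_pdt_u: "t \<in> {0..T} \<Longrightarrow> ((\<lambda>s. u s x) has_real_derivative pdt u t x) (at t)"
  using has_pdt_field[where f=u and bs="[]" and t=t and x=x] by simp
lemma has_pdt_u_x: "t \<in> {0..T} \<Longrightarrow> ((\<lambda>s. (pdx u) s x) has_real_derivative pdt (pdx u) t x) (at t)"
  using has_pdt_field[where f=u and bs="[False]" and t=t and x=x] by simp

definition "visc t x = mix mp mm (c t x)"
definition "gamma_m1 t x = mix gp gm (c t x) - 1"
definition "heat_cap t x = mix cp cm (c t x)"
definition "pres t x = gamma_m1 t x * \<rho> t x * \<theta> t x"
definition "sig t x = visc t x * pdx u t x - pres t x"
definition "pres_x t x = (gp-gm) * pdx c t x * \<rho> t x * \<theta> t x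
  + gamma_m1 t x * (pdx \<rho> t x * \<theta> t x + \<rho> t x * pdx \<theta> t x)"
definition "sig_x t x = (mp-mm) * pdx c t x * pdx u t x + visc t x * pdx (pdx u) t x - pres_x t x"
definition "pres_xx t x = (gp-gm) * pdx (pdx c) t x * \<rho> t x * \<theta> t x
   + 2 * (gp-gm) * pdx c t x * (pdx \<rho> t x * \<theta> t x + \<rho> t x * pdx \<theta> t x)
   + gamma_m1 t x * (pdx (pdx \<rho>) t x * \<theta> t x + 2 * pdx \<rho> t x * pdx \<theta> t x + \<rho> t x * pdx (pdx \<theta>) t x)"
definition "sig_xx t x = (mp-mm) * pdx (pdx c) t x * pdx u t x + 2 * (mp-mm) * pdx c t x * pdx (pdx u) t x
   + visc t x * pdx (pdx (pdx u)) t x - pres_xx t x"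
definition "pres_t t x = (gp-gm) * pdt c t x * \<rho> t x * \<theta> t x
  + gamma_m1 t x * (pdt \<rho> t x * \<theta> t x + \<rho> t x * pdt \<theta> t x)"
definition "sig_t t x = (mp-mm) * pdt c t x * pdx u t x + visc t x * pdt (pdx u) t x - pres_t t x"

lemma has_pdx_visc: "t \<in> {0..T} \<Longrightarrow> ((\<lambda>y. visc t y) has_real_derivative (mp-mm) * pdx c t x) (at x)"
  unfolding visc_def mix_def by (auto intro!: derivative_eq_intros has_pdx_c simp: algebra_simps)
lemma has_pdt_visc: "t \<in> {0..T} \<Longrightarrow> ((\<lambda>s. visc s x) has_real_derivative (mp-mm) * pdt c t x) (at t)"
  unfolding visc_def mix_def by (auto intro!: derivative_eq_intros has_pdt_c simp: algebra_simps)
lemma has_pdx_gamma_m1: "t \<in> {0..T} \<Longrightarrow> ((\<lambda>y. gamma_m1 t y) has_real_derivative (gp-gm) * pdx c t x) (at x)"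
  unfolding gamma_m1_def mix_def by (auto intro!: derivative_eq_intros has_pdx_c simp: algebra_simps)
lemma has_pdt_gamma_m1: "t \<in> {0..T} \<Longrightarrow> ((\<lambda>s. gamma_m1 s x) has_real_derivative (gp-gm) * pdt c t x) (at t)"
  unfolding gamma_m1_def mix_def by (auto intro!: derivative_eq_intros has_pdt_c simp: algebra_simps)
lemma has_pdx_heat_cap: "t \<in> {0..T} \<Longrightarrow> ((\<lambda>y. heat_cap t y) has_real_derivative (cp-cm) * pdx c t x) (at x)"
  unfolding heat_cap_def mix_def by (auto intro!: derivative_eq_intros has_pdx_c simp: algebra_simps)
lemma has_pdt_heat_cap: "t \<in> {0..T} \<Longrightarrow> ((\<lambda>s. heat_cap s x) has_real_derivative (cp-cm) * pdt c t x) (at t)"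
  unfolding heat_cap_def mix_def by (auto intro!: derivative_eq_intros has_pdt_c simp: algebra_simps)
lemma has_pdx_pres: "t \<in> {0..T} \<Longrightarrow> ((\<lambda>y. pres t y) has_real_derivative pres_x t x) (at x)"
  unfolding pres_def pres_x_def by (auto intro!: derivative_eq_intros has_pdx_gamma_m1 has_pdx_rho has_pdx_theta simp: algebra_simps)
lemma has_pdt_pres: "t \<in> {0..T} \<Longrightarrow> ((\<lambda>s. pres s x) has_real_derivative pres_t t x) (at t)"
  unfolding pres_def pres_t_def by (auto intro!: derivative_eq_intros has_pdt_gamma_m1 has_pdt_rho has_pdt_theta simp: algebra_simps)
lemma has_pdx_sig: "t \<in> {0..T} \<Longrightarrow> ((\<lambda>y. sig t y) has_real_derivative sig_x t x) (at x)"
  unfolding sig_def sig_x_def by (auto intro!: derivative_eq_intros has_pdx_visc has_pdx_u_x has_pdx_pres simp: algebra_simps)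
lemma has_pdt_sig: "t \<in> {0..T} \<Longrightarrow> ((\<lambda>s. sig s x) has_real_derivative sig_t t x) (at t)"
  unfolding sig_def sig_t_def by (auto intro!: derivative_eq_intros has_pdt_visc has_pdt_u_x has_pdt_pres simp: algebra_simps)
lemma has_pdx_pres_x: "t \<in> {0..T} \<Longrightarrow> ((\<lambda>y. pres_x t y) has_real_derivative pres_xx t x) (at x)"
  unfolding pres_x_def pres_xx_def
  by (auto intro!: derivative_eq_intros has_pdx_gamma_m1 has_pdx_rho has_pdx_theta has_pdx_c_x
      has_pdx_rho_x has_pdx_theta_x has_pdx_c simp: algebra_simps)
lemma has_pdx_sig_x: "t \<in> {0..T} \<Longrightarrow> ((\<lambda>y. sig_x t y) has_real_derivative sig_xx t x) (at x)"
  unfolding sig_x_def sig_xx_def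
  by (auto intro!: derivative_eq_intros has_pdx_visc has_pdx_u_x has_pdx_u_xx has_pdx_c_x
      has_pdx_pres_x simp: algebra_simps)

lemma c_bounds: "t \<in> {0..T} \<Longrightarrow> 0 \<le> c t x \<and> c t x \<le> 1" using bnd by blast
lemma rho_bounds: "t \<in> {0..T} \<Longrightarrow> rl \<le> \<rho> t x \<and> \<rho> t x \<le> ru" using bnd by blast
lemma theta_bounds: "t \<in> {0..T} \<Longrightarrow> tl \<le> \<theta> t x \<and> \<theta> t x \<le> tu" using bnd by blast
lemma visc_bounds: "t \<in> {0..T} \<Longrightarrow> min mp mm \<le> visc t x \<and> visc t x \<le> max mp mm"
  unfolding visc_def using c_bounds mix_bounds by blast
lemma gamma_m1_bounds: "t \<in> {0..T} \<Longrightarrow> min gp gm - 1 \<le> gamma_m1 t x \<and> gamma_m1 t x \<le> max gp gm - 1"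
  unfolding gamma_m1_def using c_bounds mix_bounds by fastforce
lemma heat_cap_bounds: "t \<in> {0..T} \<Longrightarrow> min cp cm \<le> heat_cap t x \<and> heat_cap t x \<le> max cp cm"
  unfolding heat_cap_def using c_bounds mix_bounds by blast
lemma visc_pos: "t \<in> {0..T} \<Longrightarrow> visc t x > 0" using visc_bounds[of t x] pos by linarith
lemma gamma_m1_pos: "t \<in> {0..T} \<Longrightarrow> gamma_m1 t x > 0" using gamma_m1_bounds[of t x] pos by linarith
lemma heat_cap_pos: "t \<in> {0..T} \<Longrightarrow> heat_cap t x > 0" using heat_cap_bounds[of t x] pos by linarith
lemma rho_pos: "t \<in> {0..T} \<Longrightarrow> \<rho> t x > 0" using rho_bounds[of t x] pos by linarith
lemma theta_pos: "t \<in> {0..T} \<Longrightarrow> \<theta> t x > 0" using theta_bounds[of t x] pos by linarith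

lemma stress_eq_sig: "stress mp mm gp gm c \<rho> \<theta> u = sig"
  by (intro ext) (simp add: stress_def sig_def pressure_def pres_def visc_def gamma_m1_def)
lemma energy_eq_heat_cap: "energy cp cm c \<theta> u t x = (u t x)\<^sup>2 / 2 + heat_cap t x * \<theta> t x"
  by (simp add: energy_def heat_cap_def)

lemma pdt_rho_eq: assumes t: "t \<in> {0..T}"
  shows "pdt \<rho> t x = - (pdx \<rho> t x * u t x + \<rho> t x * pdx u t x)"
proof -
  have "pdx (\<lambda>t x. \<rho> t x * u t x) t x = pdx \<rho> t x * u t x + \<rho> t x * pdx u t x"
    by (rule pdx_eqI) (auto intro!: derivative_eq_intros has_pdx_rho has_pdx_u t)
  then show ?thesis using eqs[OF t, of x] by simp
qed

lemma pdt_c_eq: assumes t: "t \<in> {0..T}"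
  shows "pdt c t x = - u t x * pdx c t x"
proof -
  have a: "pdt (\<lambda>t x. \<rho> t x * c t x) t x = pdt \<rho> t x * c t x + \<rho> t x * pdt c t x"
    by (rule pdt_eqI) (auto intro!: derivative_eq_intros has_pdt_rho has_pdt_c t)
  have b: "pdx (\<lambda>t x. \<rho> t x * c t x * u t x) t x
      = pdx \<rho> t x * c t x * u t x + \<rho> t x * pdx c t x * u t x + \<rho> t x * c t x * pdx u t x"
    by (rule pdx_eqI) (auto intro!: derivative_eq_intros has_pdx_rho has_pdx_u has_pdx_c t simp: algebra_simps)
  have "\<rho> t x * (pdt c t x + u t x * pdx c t x) = 0"
    using eqs[OF t, of x] a b pdt_rho_eq[OF t, of x] by (simp add: algebra_simps)
  then have "pdt c t x + u t x * pdx c t x = 0" using rho_pos[OF t, of x] by simp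
  then show ?thesis by linarith
qed

lemma pdt_u_eq: assumes t: "t \<in> {0..T}"
  shows "pdt u t x = sig_x t x / \<rho> t x - u t x * pdx u t x"
proof -
  have a: "pdt (\<lambda>t x. \<rho> t x * u t x) t x = pdt \<rho> t x * u t x + \<rho> t x * pdt u t x"
    by (rule pdt_eqI) (auto intro!: derivative_eq_intros has_pdt_rho has_pdt_u t)
  have b: "pdx (\<lambda>t x. \<rho> t x * (u t x)\<^sup>2) t x = pdx \<rho> t x * (u t x)\<^sup>2 + \<rho> t x * (2 * u t x * pdx u t x)"
    by (rule pdx_eqI) (auto intro!: derivative_eq_intros has_pdx_rho has_pdx_u t simp: algebra_simps)
  have s: "pdx sig t x = sig_x t x" by (rule pdx_eqI) (rule has_pdx_sig[OF t])
  have "\<rho> t x * (pdt u t x + u t x * pdx u t x) = sig_x t x"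
    using eqs[OF t, of x] a b s pdt_rho_eq[OF t, of x] by (simp add: algebra_simps stress_eq_sig power2_eq_square)
  then show ?thesis using rho_pos[OF t, of x] by (simp add: field_simps)
qed

lemma pdt_theta_eq: assumes t: "t \<in> {0..T}"
  shows "pdt \<theta> t x = sig t x * pdx u t x / (\<rho> t x * heat_cap t x) - u t x * pdx \<theta> t x"
proof -
  have a: "pdt (\<lambda>t x. \<rho> t x * energy cp cm c \<theta> u t x) t x =
     pdt \<rho> t x * ((u t x)\<^sup>2 / 2 + heat_cap t x * \<theta> t x) + \<rho> t x * (u t x * pdt u t x + (cp-cm) * pdt c t x * \<theta> t x + heat_cap t x * pdt \<theta> t x)"
    unfolding energy_eq_heat_cap
    by (rule pdt_eqI) (auto intro!: derivative_eq_intros has_pdt_rho has_pdt_u has_pdt_heat_cap has_pdt_theta t simp: algebra_simps)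
  have b: "pdx (\<lambda>t x. \<rho> t x * energy cp cm c \<theta> u t x * u t x) t x =
     pdx \<rho> t x * ((u t x)\<^sup>2 / 2 + heat_cap t x * \<theta> t x) * u t x
     + \<rho> t x * (u t x * pdx u t x + (cp-cm) * pdx c t x * \<theta> t x + heat_cap t x * pdx \<theta> t x) * u t x
     + \<rho> t x * ((u t x)\<^sup>2 / 2 + heat_cap t x * \<theta> t x) * pdx u t x"
    unfolding energy_eq_heat_cap
    by (rule pdx_eqI) (auto intro!: derivative_eq_intros has_pdx_rho has_pdx_u has_pdx_heat_cap has_pdx_theta t simp: algebra_simps)
  have d: "pdx (\<lambda>t x. stress mp mm gp gm c \<rho> \<theta> u t x * u t x) t x = sig_x t x * u t x + sig t x * pdx u t x"
    unfolding stress_eq_sig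
    by (rule pdx_eqI) (auto intro!: derivative_eq_intros has_pdx_sig has_pdx_u t simp: algebra_simps)
  have e4: "pdt (\<lambda>t x. \<rho> t x * energy cp cm c \<theta> u t x) t x
         + pdx (\<lambda>t x. \<rho> t x * energy cp cm c \<theta> u t x * u t x) t x
         = pdx (\<lambda>t x. stress mp mm gp gm c \<rho> \<theta> u t x * u t x) t x"
    using eqs[OF t, of x] by blast
  note e4' = e4[unfolded a b d]
  have mom: "\<rho> t x * pdt u t x = sig_x t x - \<rho> t x * u t x * pdx u t x"
    using pdt_u_eq[OF t, of x] rho_pos[OF t, of x] by (simp add: field_simps)
  let ?E = "(u t x)\<^sup>2 / 2 + heat_cap t x * \<theta> t x"
  have id: "\<rho> t x * heat_cap t x * (pdt \<theta> t x + u t x * pdx \<theta> t x) - sig t x * pdx u t x =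
     ((pdt \<rho> t x * ((u t x)\<^sup>2 / 2 + heat_cap t x * \<theta> t x) + \<rho> t x * (u t x * pdt u t x + (cp-cm) * pdt c t x * \<theta> t x + heat_cap t x * pdt \<theta> t x))
      + (pdx \<rho> t x * ((u t x)\<^sup>2 / 2 + heat_cap t x * \<theta> t x) * u t x
     + \<rho> t x * (u t x * pdx u t x + (cp-cm) * pdx c t x * \<theta> t x + heat_cap t x * pdx \<theta> t x) * u t x
     + \<rho> t x * ((u t x)\<^sup>2 / 2 + heat_cap t x * \<theta> t x) * pdx u t x)
      - (sig_x t x * u t x + sig t x * pdx u t x))
     - ?E * (pdt \<rho> t x + (pdx \<rho> t x * u t x + \<rho> t x * pdx u t x))
     - u t x * (\<rho> t x * pdt u t x - (sig_x t x - \<rho> t x * u t x * pdx u t x))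
     - \<rho> t x * (cp - cm) * \<theta> t x * (pdt c t x + u t x * pdx c t x)"
    by (simp add: algebra_simps power2_eq_square)
  have e: "\<rho> t x * heat_cap t x * (pdt \<theta> t x + u t x * pdx \<theta> t x) = sig t x * pdx u t x"
    using id e4' pdt_rho_eq[OF t, of x] pdt_c_eq[OF t, of x] mom by simp
  then show ?thesis using rho_pos[OF t, of x] heat_cap_pos[OF t, of x] by (simp add: field_simps)
qed

lemma pdt_u_x_eq: assumes t: "t \<in> {0..T}"
  shows "pdt (pdx u) t x = sig_xx t x / \<rho> t x - sig_x t x * pdx \<rho> t x / (\<rho> t x)\<^sup>2
      - (pdx u t x)\<^sup>2 - u t x * pdx (pdx u) t x"
proof -
  have cl: "pdt (pdx u) t x = pdx (pdt u) t x"
    using smooth_on2_pdt_pdx_commute[OF sm(4) U pos(7) t, of x] by simp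
  have f: "(\<lambda>y. pdt u t y) = (\<lambda>y. sig_x t y / \<rho> t y - u t y * pdx u t y)"
    using pdt_u_eq[OF t] by auto
  have "pdx (pdt u) t x = deriv (\<lambda>y. sig_x t y / \<rho> t y - u t y * pdx u t y) x"
    unfolding pdx_def f ..
  also have "\<dots> = sig_xx t x / \<rho> t x - sig_x t x * pdx \<rho> t x / (\<rho> t x)\<^sup>2
      - (pdx u t x)\<^sup>2 - u t x * pdx (pdx u) t x"
    using rho_pos[OF t, of x]
    by (intro DERIV_imp_deriv) (auto intro!: derivative_eq_intros has_pdx_sig_x has_pdx_rho has_pdx_u has_pdx_u_x t
         simp: field_simps power2_eq_square)
  finally show ?thesis using cl by simp
qed

section \<open>The stress functional\<close>

text \<open>The density \<open>sig_en = \<sigma>\<^sup>2 / \<mu>\<close> of the functional \<open>sig_energy\<close> satisfies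
  \<open>\<partial>\<^sub>t sig_en = sig_src + \<partial>\<^sub>x sig_flux\<close>; the source \<open>sig_src\<close> is the dissipation
  \<open>-2 \<sigma>\<^sub>x\<^sup>2 / \<rho>\<close> plus a cubic term in \<open>\<sigma>\<close>.\<close>

definition "sig_en t x = (sig t x)\<^sup>2 / visc t x"
definition "sig_en_t t x =
  2 * sig t x * sig_t t x / visc t x - (sig t x)\<^sup>2 * ((mp-mm) * pdt c t x) / (visc t x)\<^sup>2"
definition "sig_flux t x = 2 * sig t x * sig_x t x / \<rho> t x - u t x * (sig t x)\<^sup>2 / visc t x"
definition "sig_flux_x t x = 2 * (sig_x t x)\<^sup>2 / \<rho> t x + 2 * sig t x * sig_xx t x / \<rho> t x
   - 2 * sig t x * sig_x t x * pdx \<rho> t x / (\<rho> t x)\<^sup>2 - pdx u t x * (sig t x)\<^sup>2 / visc t x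
   - u t x * (2 * sig t x * sig_x t x / visc t x - (sig t x)\<^sup>2 * ((mp-mm) * pdx c t x) / (visc t x)\<^sup>2)"
definition "sig_src t x = - 2 * (sig_x t x)\<^sup>2 / \<rho> t x
  + (1 - 2 * (1 + gamma_m1 t x / heat_cap t x)) * (sig t x)\<^sup>2 * pdx u t x / visc t x"

lemma has_pdt_sig_en: "t \<in> {0..T} \<Longrightarrow> ((\<lambda>s. sig_en s x) has_real_derivative sig_en_t t x) (at t)"
  using visc_pos[of t x] unfolding sig_en_def sig_en_t_def
  by (auto intro!: derivative_eq_intros has_pdt_sig has_pdt_visc simp: field_simps power2_eq_square)

lemma has_pdx_sig_flux: "t \<in> {0..T} \<Longrightarrow> ((\<lambda>y. sig_flux t y) has_real_derivative sig_flux_x t x) (at x)"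
  using visc_pos[of t x] rho_pos[of t x] unfolding sig_flux_def sig_flux_x_def
  by (auto intro!: derivative_eq_intros has_pdx_sig has_pdx_sig_x has_pdx_rho has_pdx_u has_pdx_visc
      simp: field_simps power2_eq_square)

lemma sig_en_t_eq: assumes t: "t \<in> {0..T}" shows "sig_en_t t x = sig_src t x + sig_flux_x t x"
proof -
  have nz: "\<rho> t x \<noteq> 0" "visc t x \<noteq> 0" "heat_cap t x \<noteq> 0"
    using rho_pos[OF t, of x] visc_pos[OF t, of x] heat_cap_pos[OF t, of x] by auto
  show ?thesis
    unfolding sig_en_t_def sig_src_def sig_flux_x_def sig_t_def pres_t_def
      pdt_rho_eq[OF t] pdt_c_eq[OF t] pdt_theta_eq[OF t] pdt_u_x_eq[OF t]
    unfolding sig_def sig_x_def pres_x_def pres_def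
    using nz by (simp add: field_simps) (simp add: algebra_simps power2_eq_square)
qed

section \<open>The entropy\<close>

text \<open>The physical entropy \<open>\<rho> s\<close>, \<open>s = c\<^sub>v ln \<theta> - (\<gamma> - 1) ln \<rho>\<close>, is produced at the rate
  \<open>\<mu> (\<partial>\<^sub>x u)\<^sup>2 / \<theta> \<ge> 0\<close> and stays bounded; this controls \<open>\<integral>\<integral> (\<partial>\<^sub>x u)\<^sup>2\<close>.\<close>

definition "spec_entropy t x = heat_cap t x * ln (\<theta> t x) - gamma_m1 t x * ln (\<rho> t x)"
definition "entropy t x = \<rho> t x * spec_entropy t x"
definition "entropy_t t x = pdt \<rho> t x * spec_entropy t x
  + \<rho> t x * ((cp-cm) * pdt c t x * ln (\<theta> t x) + heat_cap t x * pdt \<theta> t x / \<theta> t x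
    - (gp-gm) * pdt c t x * ln (\<rho> t x) - gamma_m1 t x * pdt \<rho> t x / \<rho> t x)"
definition "entropy_flux t x = \<rho> t x * spec_entropy t x * u t x"
definition "entropy_flux_x t x = pdx \<rho> t x * spec_entropy t x * u t x
  + \<rho> t x * ((cp-cm) * pdx c t x * ln (\<theta> t x) + heat_cap t x * pdx \<theta> t x / \<theta> t x
    - (gp-gm) * pdx c t x * ln (\<rho> t x) - gamma_m1 t x * pdx \<rho> t x / \<rho> t x) * u t x
  + \<rho> t x * spec_entropy t x * pdx u t x"

lemma has_pdt_entropy: "t \<in> {0..T} \<Longrightarrow> ((\<lambda>s. entropy s x) has_real_derivative entropy_t t x) (at t)"
  using theta_pos[of t x] rho_pos[of t x] unfolding entropy_def entropy_t_def spec_entropy_def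
  by (auto intro!: derivative_eq_intros has_pdt_rho has_pdt_theta has_pdt_heat_cap has_pdt_gamma_m1 simp: field_simps)

lemma has_pdx_entropy_flux: "t \<in> {0..T} \<Longrightarrow> ((\<lambda>y. entropy_flux t y) has_real_derivative entropy_flux_x t x) (at x)"
  using theta_pos[of t x] rho_pos[of t x] unfolding entropy_flux_def entropy_flux_x_def spec_entropy_def
  by (auto intro!: derivative_eq_intros has_pdx_rho has_pdx_theta has_pdx_heat_cap has_pdx_gamma_m1 has_pdx_u simp: field_simps)

lemma entropy_t_eq:
  assumes t: "t \<in> {0..T}"
  shows "entropy_t t x = visc t x * (pdx u t x)\<^sup>2 / \<theta> t x - entropy_flux_x t x"
proof -
  have nz: "\<rho> t x \<noteq> 0" "\<theta> t x \<noteq> 0" "heat_cap t x \<noteq> 0"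
    using rho_pos[OF t, of x] theta_pos[OF t, of x] heat_cap_pos[OF t, of x] by auto
  show ?thesis
    unfolding entropy_t_def entropy_flux_x_def pdt_rho_eq[OF t] pdt_c_eq[OF t] pdt_theta_eq[OF t] spec_entropy_def
    unfolding sig_def pres_def
    using nz by (simp add: field_simps) (simp add: algebra_simps power2_eq_square)
qed

section \<open>Evolution of the functionals\<close>

definition "sig_energy t = integral {0..1} (\<lambda>x. sig_en t x)"
definition "total_entropy t = integral {0..1} (\<lambda>x. entropy t x)"
definition "sig_energy_rate t = integral {0..1} (\<lambda>x. sig_src t x)"
definition "entropy_prod t = integral {0..1} (\<lambda>x. visc t x * (pdx u t x)\<^sup>2 / \<theta> t x)"
definition "sig_L2 t = integral {0..1} (\<lambda>x. (sig t x)\<^sup>2)"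
definition "sig_x_L2 t = integral {0..1} (\<lambda>x. (sig_x t x)\<^sup>2)"

abbreviation "slab \<equiv> {0..T} \<times> {0..1::real}"

lemma continuous_on_slab:
  "continuous_on slab (\<lambda>q. c (fst q) (snd q))"
  "continuous_on slab (\<lambda>q. \<rho> (fst q) (snd q))"
  "continuous_on slab (\<lambda>q. \<theta> (fst q) (snd q))"
  "continuous_on slab (\<lambda>q. pdx u (fst q) (snd q))"
  "continuous_on slab (\<lambda>q. pdt c (fst q) (snd q))"
  "continuous_on slab (\<lambda>q. pdt \<rho> (fst q) (snd q))"
  "continuous_on slab (\<lambda>q. pdt \<theta> (fst q) (snd q))"
  "continuous_on slab (\<lambda>q. pdt (pdx u) (fst q) (snd q))"
proof -
  have "continuous_on slab (\<lambda>q. pdi bs f (fst q) (snd q))" if "f \<in> {c, \<rho>, \<theta>, u}" for f bs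
    by (rule continuous_field_pdi[OF that]) auto
  from this[of c "[]"] this[of \<rho> "[]"] this[of \<theta> "[]"] this[of u "[False]"]
    this[of c "[True]"] this[of \<rho> "[True]"] this[of \<theta> "[True]"] this[of u "[True, False]"]
  show
    "continuous_on slab (\<lambda>q. c (fst q) (snd q))"
    "continuous_on slab (\<lambda>q. \<rho> (fst q) (snd q))"
    "continuous_on slab (\<lambda>q. \<theta> (fst q) (snd q))"
    "continuous_on slab (\<lambda>q. pdx u (fst q) (snd q))"
    "continuous_on slab (\<lambda>q. pdt c (fst q) (snd q))"
    "continuous_on slab (\<lambda>q. pdt \<rho> (fst q) (snd q))"
    "continuous_on slab (\<lambda>q. pdt \<theta> (fst q) (snd q))"
    "continuous_on slab (\<lambda>q. pdt (pdx u) (fst q) (snd q))"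
    by simp_all
qed

lemma continuous_on_slab_coeffs:
  "continuous_on slab (\<lambda>q. visc (fst q) (snd q))"
  "continuous_on slab (\<lambda>q. gamma_m1 (fst q) (snd q))"
  "continuous_on slab (\<lambda>q. heat_cap (fst q) (snd q))"
  unfolding visc_def gamma_m1_def heat_cap_def mix_def
  by (intro continuous_intros continuous_on_slab)+

lemma continuous_on_slab_sig_en_t: "continuous_on slab (\<lambda>(s, x). sig_en_t s x)"
proof -
  have nz: "\<forall>q\<in>slab. visc (fst q) (snd q) \<noteq> 0" "\<forall>q\<in>slab. (visc (fst q) (snd q))\<^sup>2 \<noteq> 0"
    using visc_pos by (auto simp: less_imp_neq[symmetric])
  have "continuous_on slab (\<lambda>q. sig_en_t (fst q) (snd q))"
    unfolding sig_en_t_def sig_t_def pres_t_def sig_def pres_def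
    by (intro continuous_on_diff continuous_on_add continuous_on_mult continuous_on_divide
        continuous_on_power continuous_on_const continuous_on_slab continuous_on_slab_coeffs nz)
  then show ?thesis by (simp add: split_beta)
qed

lemma continuous_on_slab_entropy_t: "continuous_on slab (\<lambda>(s, x). entropy_t s x)"
proof -
  have nz: "\<forall>q\<in>slab. \<rho> (fst q) (snd q) \<noteq> 0" "\<forall>q\<in>slab. \<theta> (fst q) (snd q) \<noteq> 0"
    using rho_pos theta_pos by (auto simp: less_imp_neq[symmetric])
  have "continuous_on slab (\<lambda>q. entropy_t (fst q) (snd q))"
    unfolding entropy_t_def spec_entropy_def
    by (intro continuous_on_diff continuous_on_add continuous_on_mult continuous_on_divide
        continuous_on_ln continuous_on_const continuous_on_slab continuous_on_slab_coeffs nz)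
  then show ?thesis by (simp add: split_beta)
qed

lemma continuous_on_slices:
  assumes t: "t \<in> {0..T}"
  shows "continuous_on S (\<lambda>x. c t x)" "continuous_on S (\<lambda>x. \<rho> t x)"
    "continuous_on S (\<lambda>x. \<theta> t x)" "continuous_on S (\<lambda>x. u t x)"
    "continuous_on S (\<lambda>x. pdx u t x)" "continuous_on S (\<lambda>x. visc t x)"
    "continuous_on S (\<lambda>x. gamma_m1 t x)" "continuous_on S (\<lambda>x. heat_cap t x)"
    "continuous_on S (\<lambda>x. sig t x)" "continuous_on S (\<lambda>x. sig_x t x)"
    "continuous_on S (\<lambda>x. pres t x)"
proof -
  have cont: "continuous_on S g" if "\<And>x. (g has_real_derivative g' x) (at x)" for g g'
    by (rule DERIV_continuous_on) (rule has_field_derivative_at_within, rule that)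
  show "continuous_on S (\<lambda>x. c t x)" by (rule cont[OF has_pdx_c[OF t]])
  show "continuous_on S (\<lambda>x. \<rho> t x)" by (rule cont[OF has_pdx_rho[OF t]])
  show "continuous_on S (\<lambda>x. \<theta> t x)" by (rule cont[OF has_pdx_theta[OF t]])
  show "continuous_on S (\<lambda>x. u t x)" by (rule cont[OF has_pdx_u[OF t]])
  show "continuous_on S (\<lambda>x. pdx u t x)" by (rule cont[OF has_pdx_u_x[OF t]])
  show "continuous_on S (\<lambda>x. visc t x)" by (rule cont[OF has_pdx_visc[OF t]])
  show "continuous_on S (\<lambda>x. gamma_m1 t x)" by (rule cont[OF has_pdx_gamma_m1[OF t]])
  show "continuous_on S (\<lambda>x. heat_cap t x)" by (rule cont[OF has_pdx_heat_cap[OF t]])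
  show "continuous_on S (\<lambda>x. sig t x)" by (rule cont[OF has_pdx_sig[OF t]])
  show "continuous_on S (\<lambda>x. sig_x t x)" by (rule cont[OF has_pdx_sig_x[OF t]])
  show "continuous_on S (\<lambda>x. pres t x)" by (rule cont[OF has_pdx_pres[OF t]])
qed

lemma continuous_on_slices_derived:
  assumes t: "t \<in> {0..T}"
  shows "continuous_on S (\<lambda>x. sig_en t x)" "continuous_on S (\<lambda>x. sig_src t x)"
    "continuous_on S (\<lambda>x. entropy t x)" "continuous_on S (\<lambda>x. visc t x * (pdx u t x)\<^sup>2 / \<theta> t x)"
proof -
  note nz = visc_pos[OF t] rho_pos[OF t] heat_cap_pos[OF t] theta_pos[OF t]
  show "continuous_on S (\<lambda>x. sig_en t x)"
    unfolding sig_en_def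
    by (intro continuous_intros continuous_on_slices[OF t]) (auto simp: less_imp_neq[symmetric] nz)
  show "continuous_on S (\<lambda>x. sig_src t x)"
    unfolding sig_src_def
    by (intro continuous_intros continuous_on_slices[OF t]) (auto simp: less_imp_neq[symmetric] nz)
  show "continuous_on S (\<lambda>x. entropy t x)"
    unfolding entropy_def spec_entropy_def
    by (intro continuous_intros continuous_on_slices[OF t]) (auto simp: less_imp_neq[symmetric] nz)
  show "continuous_on S (\<lambda>x. visc t x * (pdx u t x)\<^sup>2 / \<theta> t x)"
    by (intro continuous_intros continuous_on_slices[OF t]) (auto simp: less_imp_neq[symmetric] nz)
qed

lemma fields_1_eq_0:
  "c t 1 = c t 0" "\<rho> t 1 = \<rho> t 0" "\<theta> t 1 = \<theta> t 0" "u t 1 = u t 0"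
  "pdx c t 1 = pdx c t 0" "pdx \<rho> t 1 = pdx \<rho> t 0" "pdx \<theta> t 1 = pdx \<theta> t 0"
  "pdx u t 1 = pdx u t 0" "pdx (pdx u) t 1 = pdx (pdx u) t 0"
proof -
  have "pdi bs f t 1 = pdi bs f t 0" if "f \<in> {c, \<rho>, \<theta>, u}" for f bs
    using pdi_periodic[of f bs t 0] per that by auto
  from this[of c "[]"] this[of \<rho> "[]"] this[of \<theta> "[]"] this[of u "[]"]
    this[of c "[False]"] this[of \<rho> "[False]"] this[of \<theta> "[False]"] this[of u "[False]"]
    this[of u "[False, False]"]
  show
    "c t 1 = c t 0" "\<rho> t 1 = \<rho> t 0" "\<theta> t 1 = \<theta> t 0" "u t 1 = u t 0"
    "pdx c t 1 = pdx c t 0" "pdx \<rho> t 1 = pdx \<rho> t 0" "pdx \<theta> t 1 = pdx \<theta> t 0"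
    "pdx u t 1 = pdx u t 0" "pdx (pdx u) t 1 = pdx (pdx u) t 0"
    by simp_all
qed

lemma sig_flux_periodic: "sig_flux t 1 = sig_flux t 0"
  unfolding sig_flux_def sig_def sig_x_def pres_x_def pres_def visc_def gamma_m1_def by (simp only: fields_1_eq_0)
lemma entropy_flux_periodic: "entropy_flux t 1 = entropy_flux t 0"
  unfolding entropy_flux_def spec_entropy_def heat_cap_def gamma_m1_def by (simp only: fields_1_eq_0)

lemma has_deriv_sig_energy:
  assumes t: "t \<in> {0..T}"
  shows "(sig_energy has_real_derivative sig_energy_rate t) (at t within {0..T})"
proof -
  have "sig_en_t t = (\<lambda>x. sig_src t x + sig_flux_x t x)" by (rule ext, rule sig_en_t_eq[OF t])
  moreover have "((\<lambda>x. sig_src t x + sig_flux_x t x) has_integral sig_energy_rate t) {0..1}"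
    unfolding sig_energy_rate_def
    by (rule has_integral_add_periodic_deriv[OF _ has_pdx_sig_flux[OF t] sig_flux_periodic])
       (intro integrable_integral integrable_continuous_interval continuous_on_slices_derived(2) t)
  ultimately have "integral {0..1} (sig_en_t t) = sig_energy_rate t" by (simp add: integral_unique)
  moreover have "(sig_energy has_real_derivative integral {0..1} (sig_en_t t)) (at t within {0..T})"
    unfolding sig_energy_def
    using has_real_derivative_integral_unit[OF t has_pdt_sig_en continuous_on_slices_derived(1)
        continuous_on_slab_sig_en_t]
    by simp
  ultimately show ?thesis by simp
qed

lemma has_deriv_total_entropy:
  assumes t: "t \<in> {0..T}"
  shows "(total_entropy has_real_derivative entropy_prod t) (at t within {0..T})"
proof -
  have "entropy_t t = (\<lambda>x. (visc t x * (pdx u t x)\<^sup>2 / \<theta> t x) + - entropy_flux_x t x)"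
    by (rule ext) (simp add: entropy_t_eq[OF t])
  moreover have "((\<lambda>x. (visc t x * (pdx u t x)\<^sup>2 / \<theta> t x) + - entropy_flux_x t x) has_integral
      entropy_prod t) {0..1}"
    unfolding entropy_prod_def
    by (rule has_integral_add_periodic_deriv[where G = "\<lambda>x. - entropy_flux t x"])
       (auto intro!: integrable_integral integrable_continuous_interval continuous_on_slices_derived(4)
         derivative_eq_intros has_pdx_entropy_flux t simp: entropy_flux_periodic)
  ultimately have "integral {0..1} (entropy_t t) = entropy_prod t" by (simp add: integral_unique)
  moreover have "(total_entropy has_real_derivative integral {0..1} (entropy_t t)) (at t within {0..T})"
    unfolding total_entropy_def
    using has_real_derivative_integral_unit[OF t has_pdt_entropy continuous_on_slices_derived(3)
        continuous_on_slab_entropy_t]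
    by simp
  ultimately show ?thesis by simp
qed


section \<open>Estimates\<close>

lemma pres_bounds: assumes t: "t \<in> {0..T}" shows "0 < pres t x \<and> pres t x \<le> pres_max"
proof -
  have "gamma_m1 t x * \<rho> t x * \<theta> t x \<le> (max gp gm - 1) * ru * tu"
    using gamma_m1_bounds[OF t, of x] rho_bounds[OF t, of x] theta_bounds[OF t, of x]
      gamma_m1_pos[OF t, of x] rho_pos[OF t, of x] theta_pos[OF t, of x]
    by (intro mult_mono) (auto intro: mult_nonneg_nonneg)
  then show ?thesis using gamma_m1_pos[OF t, of x] rho_pos[OF t, of x] theta_pos[OF t, of x]
    by (simp add: pres_def pres_max_def)
qed

lemma pdx_u_eq: assumes t: "t \<in> {0..T}" shows "pdx u t x = (sig t x + pres t x) / visc t x"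
  using visc_pos[OF t, of x] by (simp add: sig_def field_simps)

lemma heat_ratio_bounds:
  assumes t: "t \<in> {0..T}"
  shows "0 \<le> 1 + 2 * gamma_m1 t x / heat_cap t x"
    and "1 + 2 * gamma_m1 t x / heat_cap t x \<le> 1 + 2 * (max gp gm - 1) / min cp cm"
proof -
  have "gamma_m1 t x / heat_cap t x \<le> (max gp gm - 1) / min cp cm"
    using gamma_m1_bounds[OF t, of x] heat_cap_bounds[OF t, of x] gamma_m1_pos[OF t, of x]
      heat_cap_pos[OF t, of x] pos
    by (intro frac_le) auto
  then show "1 + 2 * gamma_m1 t x / heat_cap t x \<le> 1 + 2 * (max gp gm - 1) / min cp cm"
    unfolding times_divide_eq_right[symmetric] by linarith
  show "0 \<le> 1 + 2 * gamma_m1 t x / heat_cap t x"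
    using gamma_m1_pos[OF t, of x] heat_cap_pos[OF t, of x] by simp
qed

text \<open>Substituting \<open>\<partial>\<^sub>x u = (\<sigma> + p) / \<mu>\<close> turns the cubic part of \<open>sig_src\<close> into
  \<open>-k (\<sigma>\<^sup>3 + \<sigma>\<^sup>2 p) / \<mu>\<^sup>2\<close> with \<open>k \<ge> 0\<close>; since \<open>p > 0\<close> the term \<open>\<sigma>\<^sup>2 p\<close> has the good sign.\<close>

lemma sig_src_cubic_le:
  assumes t: "t \<in> {0..T}"
  shows "(1 - 2 * (1 + gamma_m1 t x / heat_cap t x)) * (sig t x)\<^sup>2 * pdx u t x / visc t x
    \<le> cubic_coeff * \<bar>sig t x\<bar> ^ 3"
proof -
  define k where "k = 1 + 2 * gamma_m1 t x / heat_cap t x"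
  have visc: "visc t x > 0" "visc_min \<le> visc t x" using visc_pos[OF t, of x] visc_bounds[OF t, of x] by auto
  have k: "0 \<le> k" "k \<le> 1 + 2 * (max gp gm - 1) / min cp cm"
    unfolding k_def using heat_ratio_bounds[OF t] by auto
  have "(1 - 2 * (1 + gamma_m1 t x / heat_cap t x)) * (sig t x)\<^sup>2 * pdx u t x / visc t x
        = - k * ((sig t x) ^ 3 + (sig t x)\<^sup>2 * pres t x) / (visc t x)\<^sup>2"
    unfolding pdx_u_eq[OF t] k_def using visc heat_cap_pos[OF t, of x]
    by (simp add: field_simps power2_eq_square power3_eq_cube)
  also have "\<dots> \<le> k * \<bar>sig t x\<bar> ^ 3 / (visc t x)\<^sup>2"
  proof (rule divide_right_mono)
    have "- ((sig t x) ^ 3) \<le> \<bar>sig t x\<bar> ^ 3"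
      using abs_ge_minus_self[of "(sig t x) ^ 3"] by (simp add: power_abs)
    moreover have "0 \<le> (sig t x)\<^sup>2 * pres t x" using pres_bounds[OF t, of x] by simp
    ultimately have "k * (- ((sig t x) ^ 3 + (sig t x)\<^sup>2 * pres t x)) \<le> k * \<bar>sig t x\<bar> ^ 3"
      by (intro mult_left_mono k) linarith
    then show "- k * ((sig t x) ^ 3 + (sig t x)\<^sup>2 * pres t x) \<le> k * \<bar>sig t x\<bar> ^ 3"
      by (simp add: algebra_simps)
  qed simp
  also have "\<dots> = (k / (visc t x)\<^sup>2) * \<bar>sig t x\<bar> ^ 3" by simp
  also have "\<dots> \<le> cubic_coeff * \<bar>sig t x\<bar> ^ 3"
  proof (rule mult_right_mono)
    have "visc_min\<^sup>2 \<le> (visc t x)\<^sup>2" using visc visc_min_pos by (intro power_mono) auto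
    then show "k / (visc t x)\<^sup>2 \<le> cubic_coeff" unfolding cubic_coeff_def
      using k visc_min_pos by (intro frac_le) auto
  qed simp
  finally show ?thesis .
qed

lemma sig_src_le:
  assumes t: "t \<in> {0..T}"
  shows "sig_src t x \<le> - (2 / ru) * (sig_x t x)\<^sup>2 + cubic_coeff * \<bar>sig t x\<bar> ^ 3"
proof -
  have "2 * (sig_x t x)\<^sup>2 / ru \<le> 2 * (sig_x t x)\<^sup>2 / \<rho> t x"
    using rho_bounds[OF t, of x] rho_pos[OF t, of x] by (intro divide_left_mono) auto
  then show ?thesis using sig_src_cubic_le[OF t, of x] unfolding sig_src_def by simp
qed

lemma sig_L2_nonneg: "t \<in> {0..T} \<Longrightarrow> 0 \<le> sig_L2 t"
  unfolding sig_L2_def by (rule integral_nonneg_continuous) (intro continuous_intros continuous_on_slices, auto)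
lemma sig_x_L2_nonneg: "t \<in> {0..T} \<Longrightarrow> 0 \<le> sig_x_L2 t"
  unfolding sig_x_L2_def by (rule integral_nonneg_continuous) (intro continuous_intros continuous_on_slices, auto)
lemma sig_energy_nonneg: "t \<in> {0..T} \<Longrightarrow> 0 \<le> sig_energy t"
  unfolding sig_energy_def sig_en_def
  by (rule integral_nonneg_continuous)
     (use continuous_on_slices_derived(1)[unfolded sig_en_def] visc_pos in \<open>auto simp: less_imp_le\<close>)
lemma entropy_prod_nonneg: "t \<in> {0..T} \<Longrightarrow> 0 \<le> entropy_prod t"
  unfolding entropy_prod_def
  by (rule integral_nonneg_continuous)
     (use continuous_on_slices_derived(4) visc_pos theta_pos in \<open>auto simp: less_imp_le\<close>)

lemma sig_sq_le: assumes t: "t \<in> {0..T}" and x: "x \<in> {0..1}"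
  shows "(sig t x)\<^sup>2 \<le> 2 * sig_L2 t + sig_x_L2 t"
  unfolding sig_L2_def sig_x_L2_def by (rule sq_le_integral_sq_deriv_sq[OF has_pdx_sig[OF t] continuous_on_slices(10)[OF t] x])

lemma sig_L2_le_sig_energy: assumes t: "t \<in> {0..T}" shows "sig_L2 t \<le> visc_max * sig_energy t"
proof -
  have "sig_L2 t \<le> integral {0..1} (\<lambda>x. visc_max * sig_en t x)"
    unfolding sig_L2_def
  proof (rule integral_le_continuous)
    show "continuous_on {0..1} (\<lambda>x. (sig t x)\<^sup>2)" by (intro continuous_intros continuous_on_slices t)
    show "continuous_on {0..1} (\<lambda>x. visc_max * sig_en t x)" by (intro continuous_intros continuous_on_slices_derived(1) t)
    fix x
    have "(sig t x)\<^sup>2 = visc t x * sig_en t x" using visc_pos[OF t, of x] by (simp add: sig_en_def)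
    also have "\<dots> \<le> visc_max * sig_en t x"
      using visc_bounds[OF t, of x] visc_pos[OF t, of x] by (intro mult_right_mono) (auto simp: sig_en_def)
    finally show "(sig t x)\<^sup>2 \<le> visc_max * sig_en t x" .
  qed
  then show ?thesis by (simp add: sig_energy_def)
qed

lemma sig_sq_le_entropy_dens:
  assumes t: "t \<in> {0..T}"
  shows "(sig t x)\<^sup>2 \<le> alpha * (visc t x * (pdx u t x)\<^sup>2 / \<theta> t x) + beta"
proof -
  have visc: "visc_min \<le> visc t x" "visc t x \<le> visc_max" "0 < visc t x"
    using visc_bounds[OF t, of x] visc_pos[OF t, of x] by auto
  have theta: "0 < \<theta> t x" "\<theta> t x \<le> tu" using theta_bounds[OF t, of x] theta_pos[OF t, of x] by auto
  have "(sig t x)\<^sup>2 \<le> 2 * (visc t x)\<^sup>2 * (pdx u t x)\<^sup>2 + 2 * (pres t x)\<^sup>2"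
    using sq_add_le[of "visc t x * pdx u t x" "- pres t x"] by (simp add: sig_def power_mult_distrib)
  also have "\<dots> \<le> 2 * visc_max\<^sup>2 * (pdx u t x)\<^sup>2 + 2 * pres_max\<^sup>2"
    using visc pres_bounds[OF t, of x]
    by (intro add_mono mult_right_mono mult_left_mono power_mono) auto
  also have "\<dots> \<le> alpha * (visc t x * (pdx u t x)\<^sup>2 / \<theta> t x) + beta"
  proof -
    have "visc_min * (pdx u t x)\<^sup>2 / tu \<le> visc t x * (pdx u t x)\<^sup>2 / \<theta> t x"
      using visc theta pos by (intro frac_le mult_right_mono mult_nonneg_nonneg) auto
    then have "(pdx u t x)\<^sup>2 \<le> (tu / visc_min) * (visc t x * (pdx u t x)\<^sup>2 / \<theta> t x)"
      using visc_min_pos pos theta by (simp add: field_simps)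
    then have "2 * visc_max\<^sup>2 * (pdx u t x)\<^sup>2
        \<le> 2 * visc_max\<^sup>2 * ((tu / visc_min) * (visc t x * (pdx u t x)\<^sup>2 / \<theta> t x))"
      by (intro mult_left_mono) auto
    then show ?thesis by (simp add: alpha_def beta_def)
  qed
  finally show ?thesis .
qed

lemma sig_L2_le_entropy_prod:
  assumes t: "t \<in> {0..T}"
  shows "sig_L2 t \<le> alpha * entropy_prod t + beta"
proof -
  have "sig_L2 t \<le> integral {0..1} (\<lambda>x. alpha * (visc t x * (pdx u t x)\<^sup>2 / \<theta> t x) + beta)"
    unfolding sig_L2_def
  proof (rule integral_le_continuous)
    show "continuous_on {0..1} (\<lambda>x. (sig t x)\<^sup>2)"
      by (intro continuous_intros continuous_on_slices t)
    show "continuous_on {0..1} (\<lambda>x. alpha * (visc t x * (pdx u t x)\<^sup>2 / \<theta> t x) + beta)"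
      by (intro continuous_intros continuous_on_slices_derived(4) t)
  qed (rule sig_sq_le_entropy_dens[OF t])
  also have "\<dots> = alpha * entropy_prod t + beta"
  proof -
    have i: "(\<lambda>x. alpha * (visc t x * (pdx u t x)\<^sup>2 / \<theta> t x)) integrable_on {0..1}"
      by (intro integrable_continuous_interval continuous_intros continuous_on_slices_derived(4) t)
    show ?thesis
      unfolding integral_add[OF i integrable_const_ivl] integral_mult_right entropy_prod_def
      by simp
  qed
  finally show ?thesis .
qed

lemma abs_sig_le_sqrt:
  assumes t: "t \<in> {0..T}" and x: "x \<in> {0..1}"
  shows "\<bar>sig t x\<bar> \<le> sqrt (2 * sig_L2 t + sig_x_L2 t)"
  using real_sqrt_le_mono[OF sig_sq_le[OF t x]] by simp

lemma sig_energy_rate_le_cubic: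
  assumes t: "t \<in> {0..T}"
  shows "sig_energy_rate t \<le> - (1/ru) * sig_x_L2 t + (1/ru) * sig_L2 t + young_coeff * (sig_L2 t)\<^sup>2"
proof -
  define M where "M = sqrt (2 * sig_L2 t + sig_x_L2 t)"
  have M2: "M\<^sup>2 = 2 * sig_L2 t + sig_x_L2 t"
    unfolding M_def using sig_L2_nonneg[OF t] sig_x_L2_nonneg[OF t] by simp
  have i1: "(\<lambda>x. - (2 / ru) * (sig_x t x)\<^sup>2) integrable_on {0..1}"
    by (intro integrable_continuous_interval continuous_intros continuous_on_slices t)
  have i2: "(\<lambda>x. cubic_coeff * M * (sig t x)\<^sup>2) integrable_on {0..1}"
    by (intro integrable_continuous_interval continuous_intros continuous_on_slices t)
  have "sig_energy_rate t
      \<le> integral {0..1} (\<lambda>x. - (2 / ru) * (sig_x t x)\<^sup>2 + cubic_coeff * M * (sig t x)\<^sup>2)"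
    unfolding sig_energy_rate_def
  proof (rule integral_le_continuous)
    show "continuous_on {0..1} (sig_src t)" using continuous_on_slices_derived(2)[OF t] by simp
    show "continuous_on {0..1} (\<lambda>x. - (2 / ru) * (sig_x t x)\<^sup>2 + cubic_coeff * M * (sig t x)\<^sup>2)"
      by (intro continuous_intros continuous_on_slices t)
    fix x :: real assume x: "x \<in> {0..1}"
    have "\<bar>sig t x\<bar> ^ 3 = \<bar>sig t x\<bar> * (sig t x)\<^sup>2"
      by (simp add: power3_eq_cube power2_eq_square abs_mult)
    also have "\<dots> \<le> M * (sig t x)\<^sup>2"
      unfolding M_def by (rule mult_right_mono[OF abs_sig_le_sqrt[OF t x]]) simp
    finally have "cubic_coeff * \<bar>sig t x\<bar> ^ 3 \<le> cubic_coeff * (M * (sig t x)\<^sup>2)"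
      by (rule mult_left_mono[OF _ constants_nonneg(1)])
    then show "sig_src t x \<le> - (2 / ru) * (sig_x t x)\<^sup>2 + cubic_coeff * M * (sig t x)\<^sup>2"
      using sig_src_le[OF t, of x] by (simp add: mult.assoc)
  qed
  also have "\<dots> = - (2 / ru) * sig_x_L2 t + cubic_coeff * M * sig_L2 t"
    unfolding integral_add[OF i1 i2] integral_mult_right sig_x_L2_def sig_L2_def ..
  also have "\<dots> \<le> - (1/ru) * sig_x_L2 t + (1/ru) * sig_L2 t + young_coeff * (sig_L2 t)\<^sup>2"
    unfolding young_coeff_def using young_cubic_le[OF _ M2 sig_x_L2_nonneg[OF t]] pos by simp
  finally show ?thesis .
qed

lemma sig_energy_rate_le: assumes t: "t \<in> {0..T}"
  shows "sig_energy_rate t \<le> - (1/ru) * sig_x_L2 t + (gron_a + gron_b * entropy_prod t) * sig_energy t"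
proof -
  have sig_L2: "0 \<le> sig_L2 t" "sig_L2 t \<le> alpha * entropy_prod t + beta"
      "sig_L2 t \<le> visc_max * sig_energy t"
    using sig_L2_nonneg[OF t] sig_L2_le_entropy_prod[OF t] sig_L2_le_sig_energy[OF t] by auto
  have f: "0 \<le> 1/ru + young_coeff * (alpha * entropy_prod t + beta)"
    using constants_nonneg(2,3,4) entropy_prod_nonneg[OF t] pos
    by (intro add_nonneg_nonneg mult_nonneg_nonneg) auto
  have "(1/ru) * sig_L2 t + young_coeff * (sig_L2 t)\<^sup>2 = sig_L2 t * (1/ru + young_coeff * sig_L2 t)"
    by (simp add: power2_eq_square algebra_simps)
  also have "\<dots> \<le> sig_L2 t * (1/ru + young_coeff * (alpha * entropy_prod t + beta))"
    using sig_L2 constants_nonneg(2) by (intro mult_left_mono add_left_mono) auto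
  also have "\<dots> \<le> (visc_max * sig_energy t) * (1/ru + young_coeff * (alpha * entropy_prod t + beta))"
    using sig_L2 f by (intro mult_right_mono) auto
  also have "\<dots> = (gron_a + gron_b * entropy_prod t) * sig_energy t"
    by (simp add: gron_a_def gron_b_def algebra_simps)
  finally show ?thesis using sig_energy_rate_le_cubic[OF t] by linarith
qed

lemma abs_entropy_le: assumes t: "t \<in> {0..T}" shows "\<bar>entropy t x\<bar> \<le> entropy_max"
proof -
  have l1: "\<bar>ln (\<theta> t x)\<bar> \<le> \<bar>ln tl\<bar> + \<bar>ln tu\<bar>" using theta_bounds[OF t, of x] pos by (intro abs_ln_le) auto
  have l2: "\<bar>ln (\<rho> t x)\<bar> \<le> \<bar>ln rl\<bar> + \<bar>ln ru\<bar>" using rho_bounds[OF t, of x] pos by (intro abs_ln_le) auto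
  have "\<bar>spec_entropy t x\<bar> \<le> \<bar>heat_cap t x\<bar> * \<bar>ln (\<theta> t x)\<bar> + \<bar>gamma_m1 t x\<bar> * \<bar>ln (\<rho> t x)\<bar>"
    unfolding spec_entropy_def by (metis abs_mult abs_triangle_ineq4)
  also have "\<dots> \<le> max cp cm * (\<bar>ln tl\<bar> + \<bar>ln tu\<bar>) + (max gp gm - 1) * (\<bar>ln rl\<bar> + \<bar>ln ru\<bar>)"
    using heat_cap_bounds[OF t, of x] heat_cap_pos[OF t, of x] gamma_m1_bounds[OF t, of x]
      gamma_m1_pos[OF t, of x] l1 l2
    by (intro add_mono mult_mono) auto
  finally have e: "\<bar>spec_entropy t x\<bar>
      \<le> max cp cm * (\<bar>ln tl\<bar> + \<bar>ln tu\<bar>) + (max gp gm - 1) * (\<bar>ln rl\<bar> + \<bar>ln ru\<bar>)" .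
  have "\<bar>entropy t x\<bar> = \<rho> t x * \<bar>spec_entropy t x\<bar>" using rho_pos[OF t, of x] by (simp add: entropy_def abs_mult)
  also have "\<dots> \<le> entropy_max"
    unfolding entropy_max_def using rho_bounds[OF t, of x] rho_pos[OF t, of x] e
    by (intro mult_mono) auto
  finally show ?thesis .
qed

lemma abs_total_entropy_le: assumes t: "t \<in> {0..T}" shows "\<bar>total_entropy t\<bar> \<le> entropy_max"
proof -
  have "norm (integral {0..1} (\<lambda>x. entropy t x)) \<le> integral {0..1::real} (\<lambda>x. entropy_max)"
    by (rule integral_norm_bound_integral)
       (auto intro: integrable_continuous_interval continuous_on_slices_derived(3)[OF t]
         abs_entropy_le[OF t])
  then show ?thesis by (simp add: total_entropy_def)
qed

lemma sig_energy_0_le: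
  "sig_energy 0 \<le> sig_energy_0_max (integral {0..1} (\<lambda>x. (stress mp mm gp gm c \<rho> \<theta> u 0 x)\<^sup>2))"
proof -
  have t: "(0::real) \<in> {0..T}" using pos by auto
  have "sig_energy 0 \<le> integral {0..1} (\<lambda>x. (sig 0 x)\<^sup>2 / visc_min)"
    unfolding sig_energy_def
  proof (rule integral_le_continuous)
    show "continuous_on {0..1} (sig_en 0)" using continuous_on_slices_derived(1)[OF t] by simp
    show "continuous_on {0..1} (\<lambda>x. (sig 0 x)\<^sup>2 / visc_min)" by (intro continuous_intros continuous_on_slices t) (use visc_min_pos in auto)
    fix x
    show "sig_en 0 x \<le> (sig 0 x)\<^sup>2 / visc_min" unfolding sig_en_def
      using visc_bounds[OF t, of x] visc_min_pos by (intro divide_left_mono) auto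
  qed
  also have "\<dots> = integral {0..1} (\<lambda>x. (stress mp mm gp gm c \<rho> \<theta> u 0 x)\<^sup>2) / visc_min"
    by (simp add: stress_eq_sig)
  also have "\<dots> \<le> sig_energy_0_max (integral {0..1} (\<lambda>x. (stress mp mm gp gm c \<rho> \<theta> u 0 x)\<^sup>2))"
    unfolding sig_energy_0_max_def using visc_min_pos by (intro divide_right_mono) auto
  finally show ?thesis .
qed

lemma pdx_u_sq_le:
  assumes t: "t \<in> {0..T}"
  shows "(pdx u t x)\<^sup>2 \<le> 2 * ((sig t x)\<^sup>2 + pres_max\<^sup>2) / visc_min\<^sup>2"
proof -
  have "\<bar>pdx u t x\<bar> = \<bar>sig t x + pres t x\<bar> / visc t x"
    using visc_pos[OF t, of x] by (simp add: pdx_u_eq[OF t])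
  also have "\<dots> \<le> (\<bar>sig t x\<bar> + pres_max) / visc_min"
    using pres_bounds[OF t, of x] visc_bounds[OF t, of x] visc_min_pos
    by (intro frac_le) (auto intro: order_trans[OF abs_triangle_ineq])
  finally have "\<bar>pdx u t x\<bar>\<^sup>2 \<le> ((\<bar>sig t x\<bar> + pres_max) / visc_min)\<^sup>2"
    by (rule power_mono) simp
  also have "\<dots> \<le> (2 * \<bar>sig t x\<bar>\<^sup>2 + 2 * pres_max\<^sup>2) / visc_min\<^sup>2"
    unfolding power_divide by (rule divide_right_mono[OF sq_add_le]) simp
  finally show ?thesis by (simp add: algebra_simps)
qed

lemma L2_pdx_u_le:
  assumes t: "t \<in> {0..T}"
  shows "integral {0..1} (\<lambda>x. (pdx u t x)\<^sup>2) \<le> 2 * (visc_max * sig_energy t + pres_max\<^sup>2) / visc_min\<^sup>2"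
proof -
  have "integral {0..1} (\<lambda>x. (pdx u t x)\<^sup>2)
      \<le> integral {0..1} (\<lambda>x. (2 / visc_min\<^sup>2) * (sig t x)\<^sup>2 + 2 * pres_max\<^sup>2 / visc_min\<^sup>2)"
  proof (rule integral_le_continuous)
    show "continuous_on {0..1} (\<lambda>x. (pdx u t x)\<^sup>2)"
      by (intro continuous_intros continuous_on_slices t)
    show "continuous_on {0..1} (\<lambda>x. (2 / visc_min\<^sup>2) * (sig t x)\<^sup>2 + 2 * pres_max\<^sup>2 / visc_min\<^sup>2)"
      by (intro continuous_intros continuous_on_slices t)
    fix x
    show "(pdx u t x)\<^sup>2 \<le> (2 / visc_min\<^sup>2) * (sig t x)\<^sup>2 + 2 * pres_max\<^sup>2 / visc_min\<^sup>2"
      using pdx_u_sq_le[OF t, of x] by (simp add: add_divide_distrib distrib_left)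
  qed
  also have "\<dots> = (2 / visc_min\<^sup>2) * sig_L2 t + 2 * pres_max\<^sup>2 / visc_min\<^sup>2"
  proof -
    have i: "(\<lambda>x. (2 / visc_min\<^sup>2) * (sig t x)\<^sup>2) integrable_on {0..1}"
      by (intro integrable_continuous_interval continuous_intros continuous_on_slices t)
    show ?thesis
      unfolding integral_add[OF i integrable_const_ivl] integral_mult_right sig_L2_def by simp
  qed
  also have "\<dots> \<le> (2 / visc_min\<^sup>2) * (visc_max * sig_energy t) + 2 * pres_max\<^sup>2 / visc_min\<^sup>2"
    using sig_L2_le_sig_energy[OF t] by (intro add_right_mono mult_left_mono) auto
  also have "\<dots> = 2 * (visc_max * sig_energy t + pres_max\<^sup>2) / visc_min\<^sup>2"
    by (simp add: add_divide_distrib algebra_simps)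
  finally show ?thesis .
qed

lemma sup_pdx_u_sq_le:
  assumes t: "t \<in> {0..T}"
  shows "(SUP x\<in>{0..1}. \<bar>pdx u t x\<bar>)\<^sup>2 \<le> (4 * alpha / visc_min\<^sup>2) * entropy_prod t
    + (2 / visc_min\<^sup>2) * sig_x_L2 t + (4 * beta + 2 * pres_max\<^sup>2) / visc_min\<^sup>2"
proof -
  define B where "B = 2 * (2 * sig_L2 t + sig_x_L2 t + pres_max\<^sup>2) / visc_min\<^sup>2"
  have ub: "\<bar>pdx u t x\<bar> \<le> sqrt B" if x: "x \<in> {0..1}" for x
  proof -
    have "(pdx u t x)\<^sup>2 \<le> B"
      unfolding B_def using pdx_u_sq_le[OF t, of x] sig_sq_le[OF t x]
      by (smt (verit) divide_right_mono mult_left_mono zero_le_power2)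
    then show ?thesis using real_sqrt_le_mono by fastforce
  qed
  have "(SUP x\<in>{0..1}. \<bar>pdx u t x\<bar>) \<le> sqrt B"
    by (rule cSUP_least) (use ub in auto)
  moreover have "0 \<le> (SUP x\<in>{0..1}. \<bar>pdx u t x\<bar>)"
  proof (rule cSUP_upper2[where x=0])
    show "bdd_above ((\<lambda>x. \<bar>pdx u t x\<bar>) ` {0..1})" by (rule bdd_aboveI2[OF ub]) auto
  qed auto
  moreover have "0 \<le> B"
    unfolding B_def using sig_L2_nonneg[OF t] sig_x_L2_nonneg[OF t] by simp
  ultimately have "(SUP x\<in>{0..1}. \<bar>pdx u t x\<bar>)\<^sup>2 \<le> B"
    using power_mono[of _ "sqrt B" 2] by fastforce
  also have "\<dots> \<le> (4 * alpha * entropy_prod t + 2 * sig_x_L2 t + (4 * beta + 2 * pres_max\<^sup>2))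
      / visc_min\<^sup>2"
    unfolding B_def using sig_L2_le_entropy_prod[OF t] by (intro divide_right_mono) auto
  also have "\<dots> = (4 * alpha / visc_min\<^sup>2) * entropy_prod t
      + (2 / visc_min\<^sup>2) * sig_x_L2 t + (4 * beta + 2 * pres_max\<^sup>2) / visc_min\<^sup>2"
    by (simp add: add_divide_distrib)
  finally show ?thesis .
qed

context
  fixes S0 :: real
  assumes S0: "integral {0..1} (\<lambda>x. (stress mp mm gp gm c \<rho> \<theta> u 0 x)\<^sup>2) = S0"
begin

lemma sig_energy_le_max:
  assumes t: "t \<in> {0..T}"
  shows "sig_energy t \<le> sig_energy_max S0"
  unfolding sig_energy_max_def
proof (rule gronwall_exp_bound[OF t constants_nonneg(6,7) has_deriv_sig_energy has_deriv_total_entropy])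
  fix s assume s: "s \<in> {0..T}"
  show "sig_energy_rate s \<le> (gron_a + gron_b * entropy_prod s) * sig_energy s"
  proof -
    have "0 \<le> (1 / ru) * sig_x_L2 s" using sig_x_L2_nonneg[OF s] pos by simp
    then show ?thesis using sig_energy_rate_le[OF s] by linarith
  qed
qed (use abs_total_entropy_le sig_energy_0_le S0 constants_nonneg(8) in auto)

lemma L2_pdx_u_le_C8:
  assumes t: "t \<in> {0..T}"
  shows "integral {0..1} (\<lambda>x. (pdx u t x)\<^sup>2) \<le> C8 S0"
proof -
  have "2 * (visc_max * sig_energy t + pres_max\<^sup>2) / visc_min\<^sup>2
      \<le> 2 * (visc_max * sig_energy_max S0 + pres_max\<^sup>2) / visc_min\<^sup>2"
    using sig_energy_le_max[OF t] pos by (intro divide_right_mono mult_left_mono add_right_mono) auto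
  then show ?thesis using L2_pdx_u_le[OF t] unfolding C8_def by linarith
qed

lemma integral_sup_pdx_u_sq_le_C9:
  "integral {0..T} (\<lambda>t. (SUP x\<in>{0..1}. \<bar>pdx u t x\<bar>)\<^sup>2) \<le> C9 S0"
proof -
  have T: "0 \<le> T" and w: "0 < 1 / ru" using pos by simp_all
  have e: "0 \<le> 4 * alpha / visc_min\<^sup>2" "0 \<le> 2 / visc_min\<^sup>2"
    "0 \<le> (4 * beta + 2 * pres_max\<^sup>2) / visc_min\<^sup>2"
    using constants_nonneg(3,4) by simp_all
  have Yb: "0 \<le> sig_energy t \<and> sig_energy t \<le> sig_energy_max S0" if t: "t \<in> {0..T}" for t
    using sig_energy_nonneg[OF t] sig_energy_le_max[OF t] by simp
  have h: "0 \<le> (SUP x\<in>{0..1}. \<bar>pdx u t x\<bar>)\<^sup>2 \<and> (SUP x\<in>{0..1}. \<bar>pdx u t x\<bar>)\<^sup>2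
      \<le> 4 * alpha / visc_min\<^sup>2 * entropy_prod t + 2 / visc_min\<^sup>2 * sig_x_L2 t
        + (4 * beta + 2 * pres_max\<^sup>2) / visc_min\<^sup>2" if t: "t \<in> {0..T}" for t
    using sup_pdx_u_sq_le[OF t] by simp
  have Y0: "sig_energy 0 \<le> sig_energy_0_max S0" using sig_energy_0_le unfolding S0 .
  have "integral {0..T} (\<lambda>t. (SUP x\<in>{0..1}. \<bar>pdx u t x\<bar>)\<^sup>2) \<le> C9 S0 - 1"
    unfolding C9_def add_diff_cancel_right'
    by (rule integral_le_dissipation_bound[OF T w constants_nonneg(6,7) e has_deriv_sig_energy
          has_deriv_total_entropy sig_energy_rate_le entropy_prod_nonneg Yb abs_total_entropy_le Y0 h])
  then show ?thesis by simp
qed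

end

end

lemma bounded_NS_solutionI:
  fixes mp mm gp gm cp cm T rl ru tl tu :: real and c \<rho> \<theta> u :: "real \<Rightarrow> real \<Rightarrow> real"
  assumes const: "NS_constants mp mm gp gm cp cm T rl ru tl tu"
    and NS: "NS_solution mp mm gp gm cp cm T c \<rho> \<theta> u"
    and bnd: "\<forall>t\<in>{0..T}. \<forall>x. 0 \<le> c t x \<and> c t x \<le> 1 \<and>
          rl \<le> \<rho> t x \<and> \<rho> t x \<le> ru \<and> tl \<le> \<theta> t x \<and> \<theta> t x \<le> tu"
  obtains U where "bounded_NS_solution mp mm gp gm cp cm T rl ru tl tu c \<rho> \<theta> u U"
proof -
  from NS obtain U where "{0..T} \<times> UNIV \<subseteq> U"
    and "smooth_on2 U c" "smooth_on2 U \<rho>" "smooth_on2 U \<theta>" "smooth_on2 U u"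
    unfolding NS_solution_def by blast
  moreover have "\<forall>t x. c t (x + 1) = c t x \<and> \<rho> t (x + 1) = \<rho> t x \<and>
      \<theta> t (x + 1) = \<theta> t x \<and> u t (x + 1) = u t x"
    using NS unfolding NS_solution_def by blast
  moreover have "\<forall>t\<in>{0..T}. \<forall>x.
      pdt \<rho> t x + pdx (\<lambda>t x. \<rho> t x * u t x) t x = 0 \<and>
      pdt (\<lambda>t x. \<rho> t x * c t x) t x + pdx (\<lambda>t x. \<rho> t x * c t x * u t x) t x = 0 \<and>
      pdt (\<lambda>t x. \<rho> t x * u t x) t x + pdx (\<lambda>t x. \<rho> t x * (u t x)\<^sup>2) t x
        = pdx (stress mp mm gp gm c \<rho> \<theta> u) t x \<and>
      pdt (\<lambda>t x. \<rho> t x * energy cp cm c \<theta> u t x) t x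
        + pdx (\<lambda>t x. \<rho> t x * energy cp cm c \<theta> u t x * u t x) t x
        = pdx (\<lambda>t x. stress mp mm gp gm c \<rho> \<theta> u t x * u t x) t x"
    using NS unfolding NS_solution_def Let_def by blast
  ultimately have "bounded_NS_solution mp mm gp gm cp cm T rl ru tl tu c \<rho> \<theta> u U"
    using const bnd by (simp add: bounded_NS_solution_def bounded_NS_solution_axioms_def)
  then show ?thesis by (rule that)
qed

theorem mainTheorem5:
  fixes mp mm gp gm cp cm T rl ru tl tu S0 E0 :: real
  assumes "mp > 0" "mm > 0" "gp > 1" "gm > 1" "cp > 0" "cm > 0"
    and "T > 0" and "rl > 0" "ru > 0" "tl > 0" "tu > 0"
  shows "\<exists>C8 C9. C8 > 0 \<and> C9 > 0 \<and>
    (\<forall>c \<rho> \<theta> u.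
       NS_solution mp mm gp gm cp cm T c \<rho> \<theta> u \<and>
       (\<forall>t\<in>{0..T}. \<forall>x. 0 \<le> c t x \<and> c t x \<le> 1 \<and>
          rl \<le> \<rho> t x \<and> \<rho> t x \<le> ru \<and> tl \<le> \<theta> t x \<and> \<theta> t x \<le> tu) \<and>
       integral {0..1} (\<lambda>x. (stress mp mm gp gm c \<rho> \<theta> u 0 x)\<^sup>2) = S0 \<and>
       integral {0..1} (\<lambda>x. \<rho> 0 x * energy cp cm c \<theta> u 0 x) = E0
     \<longrightarrow>
       (\<forall>t\<in>{0..T}. integral {0..1} (\<lambda>x. (pdx u t x)\<^sup>2) \<le> C8) \<and>
       integral {0..T} (\<lambda>t. (SUP x\<in>{0..1}. \<bar>pdx u t x\<bar>)\<^sup>2) \<le> C9)"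
proof -
  interpret NS_constants mp mm gp gm cp cm T rl ru tl tu
    by unfold_locales (use assms in auto)
  show ?thesis
  proof (rule exI[of _ "C8 S0"], rule exI[of _ "C9 S0"], intro conjI allI impI C8_pos C9_pos)
    fix c \<rho> \<theta> u
    assume "NS_solution mp mm gp gm cp cm T c \<rho> \<theta> u \<and>
       (\<forall>t\<in>{0..T}. \<forall>x. 0 \<le> c t x \<and> c t x \<le> 1 \<and>
          rl \<le> \<rho> t x \<and> \<rho> t x \<le> ru \<and> tl \<le> \<theta> t x \<and> \<theta> t x \<le> tu) \<and>
       integral {0..1} (\<lambda>x. (stress mp mm gp gm c \<rho> \<theta> u 0 x)\<^sup>2) = S0 \<and>
       integral {0..1} (\<lambda>x. \<rho> 0 x * energy cp cm c \<theta> u 0 x) = E0"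
    then have NS: "NS_solution mp mm gp gm cp cm T c \<rho> \<theta> u"
      and bounds: "\<forall>t\<in>{0..T}. \<forall>x. 0 \<le> c t x \<and> c t x \<le> 1 \<and>
          rl \<le> \<rho> t x \<and> \<rho> t x \<le> ru \<and> tl \<le> \<theta> t x \<and> \<theta> t x \<le> tu"
      and S0: "integral {0..1} (\<lambda>x. (stress mp mm gp gm c \<rho> \<theta> u 0 x)\<^sup>2) = S0"
      by simp_all
    obtain U where "bounded_NS_solution mp mm gp gm cp cm T rl ru tl tu c \<rho> \<theta> u U"
      using bounded_NS_solutionI[OF NS_constants_axioms NS bounds] .
    then interpret bounded_NS_solution mp mm gp gm cp cm T rl ru tl tu c \<rho> \<theta> u U .
    show "\<forall>t\<in>{0..T}. integral {0..1} (\<lambda>x. (pdx u t x)\<^sup>2) \<le> C8 S0"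
      using L2_pdx_u_le_C8[OF S0] by blast
    show "integral {0..T} (\<lambda>t. (SUP x\<in>{0..1}. \<bar>pdx u t x\<bar>)\<^sup>2) \<le> C9 S0"
      using integral_sup_pdx_u_sq_le_C9[OF S0] by simp
  qed
qed

end
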